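(* Let $\alpha$ be a composition of $r+1$, $\lambda_\alpha=\sum_{i\in D(\alpha)}\lambda_i$ and $z_\alpha=e^{\lambda_\alpha}$. If $w\in W$ satisfies $D(w)\subseteq D(\alpha)$, then \[ \overline\pi_wz_\alpha=e^{w\lambda_\alpha}+\sum_{[\lambda]_+<\lambda_\alpha}c_\lambda e^\lambda,\qquad c_\lambda\in\mathbb{Z}. \] Moreover, $e^{w\lambda_\alpha}$ is a descent monomial if and only if $D(w)=D(\alpha)$.
   Context: $W$ is the Weyl group of a root system of rank $r$ with simple roots $\gamma_1,\dots,\gamma_r$, simple reflections $s_1,\dots,s_r$, fundamental weights $\lambda_1,\dots,\lambda_r$, weight lattice $\Lambda$; $\mathbb{F}[\Lambda]$ is the group algebra with basis $e^\lambda$, $W$ acting by $we^\lambda=e^{w\lambda}$. Demazure operators $\pi_if=\frac{f-e^{-\gamma_i}s_i(f)}{1-e^{-\gamma_i}}$, $\overline\pi_i=\pi_i-1$, $\overline\pi_w$ defined via reduced words. $D(w)=\{i:\ell(ws_i)<\ell(w)\}$; compositions of $r+1$ correspond to subsets $D(\alpha)\subseteq[r]$ via partial sums. For $I\subseteq[r]$, $\lambda_I=\sum_{i\in I}\lambda_i$, and the descent monomial of $u\in W$ is $z_u=e^{u\lambda_{D(u)}}$. Weights are ordered by $\lambda\le\mu$ iff $\mu-\lambda$ is a nonnegative integer combination of simple roots; $[\lambda]_+$ is the unique dominant weight in the $W$-orbit of $\lambda$. *)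

theory Defs
  imports Main "HOL-Library.Function_Algebras" "HOL-Library.Poly_Mapping"
begin

text \<open>Root datum of rank r given by an r x r integer Cartan matrix A (indices 1..r),
  A i j = <gamma_i^vee, gamma_j>.  Weights are integer vectors in the basis of
  fundamental weights lambda_1..lambda_r, represented as functions nat => int
  vanishing outside {1..r}.\<close>

type_synonym wt = "nat \<Rightarrow> int"

definition in_lattice :: "nat \<Rightarrow> wt \<Rightarrow> bool" where
  "in_lattice r lam \<longleftrightarrow> (\<forall>i. i \<notin> {1..r} \<longrightarrow> lam i = 0)"

definition sroot :: "(nat \<Rightarrow> nat \<Rightarrow> int) \<Rightarrow> nat \<Rightarrow> nat \<Rightarrow> wt" where
  "sroot A r j = (\<lambda>k. if k \<in> {1..r} then A k j else 0)"

definition sref :: "(nat \<Rightarrow> nat \<Rightarrow> int) \<Rightarrow> nat \<Rightarrow> nat \<Rightarrow> wt \<Rightarrow> wt" where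
  "sref A r i lam = (\<lambda>k. lam k - lam i * sroot A r i k)"

inductive_set weyl :: "(nat \<Rightarrow> nat \<Rightarrow> int) \<Rightarrow> nat \<Rightarrow> (wt \<Rightarrow> wt) set"
  for A r where
  weyl_id: "id \<in> weyl A r"
| weyl_step: "i \<in> {1..r} \<Longrightarrow> w \<in> weyl A r \<Longrightarrow> sref A r i \<circ> w \<in> weyl A r"

text \<open>generalized Cartan matrix; with finite Weyl group this is exactly a
  Cartan matrix of a (finite, crystallographic) root system of rank r\<close>
definition is_gcm :: "(nat \<Rightarrow> nat \<Rightarrow> int) \<Rightarrow> nat \<Rightarrow> bool" where
  "is_gcm A r \<longleftrightarrow> (\<forall>i\<in>{1..r}. A i i = 2)
     \<and> (\<forall>i\<in>{1..r}. \<forall>j\<in>{1..r}. i \<noteq> j \<longrightarrow> A i j \<le> 0)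
     \<and> (\<forall>i\<in>{1..r}. \<forall>j\<in>{1..r}. A i j = 0 \<longleftrightarrow> A j i = 0)"

definition root_datum :: "(nat \<Rightarrow> nat \<Rightarrow> int) \<Rightarrow> nat \<Rightarrow> bool" where
  "root_datum A r \<longleftrightarrow> is_gcm A r \<and> finite (weyl A r)"

definition word_map :: "(nat \<Rightarrow> nat \<Rightarrow> int) \<Rightarrow> nat \<Rightarrow> nat list \<Rightarrow> wt \<Rightarrow> wt" where
  "word_map A r ws = foldr (\<lambda>i f. sref A r i \<circ> f) ws id"

definition wlen :: "(nat \<Rightarrow> nat \<Rightarrow> int) \<Rightarrow> nat \<Rightarrow> (wt \<Rightarrow> wt) \<Rightarrow> nat" where
  "wlen A r w = (LEAST n. \<exists>ws. set ws \<subseteq> {1..r} \<and> length ws = n \<and> word_map A r ws = w)"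

definition reduced_word :: "(nat \<Rightarrow> nat \<Rightarrow> int) \<Rightarrow> nat \<Rightarrow> (wt \<Rightarrow> wt) \<Rightarrow> nat list \<Rightarrow> bool" where
  "reduced_word A r w ws \<longleftrightarrow> set ws \<subseteq> {1..r} \<and> word_map A r ws = w \<and> length ws = wlen A r w"

definition descents :: "(nat \<Rightarrow> nat \<Rightarrow> int) \<Rightarrow> nat \<Rightarrow> (wt \<Rightarrow> wt) \<Rightarrow> nat set" where
  "descents A r w = {i \<in> {1..r}. wlen A r (w \<circ> sref A r i) < wlen A r w}"

text \<open>group algebra Z[Lambda]: finitely supported functions wt => int; e^lam = single lam 1\<close>
definition sact :: "(nat \<Rightarrow> nat \<Rightarrow> int) \<Rightarrow> nat \<Rightarrow> nat \<Rightarrow> (wt \<Rightarrow>\<^sub>0 int) \<Rightarrow> (wt \<Rightarrow>\<^sub>0 int)" where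
  "sact A r i f = Abs_poly_mapping (\<lambda>mu. Poly_Mapping.lookup f (sref A r i mu))"

definition demazure :: "(nat \<Rightarrow> nat \<Rightarrow> int) \<Rightarrow> nat \<Rightarrow> nat \<Rightarrow> (wt \<Rightarrow>\<^sub>0 int) \<Rightarrow> (wt \<Rightarrow>\<^sub>0 int)" where
  "demazure A r i f = (THE g. (1 - Poly_Mapping.single (- sroot A r i) 1) * g
        = f - Poly_Mapping.single (- sroot A r i) 1 * sact A r i f)"

definition demazure_bar :: "(nat \<Rightarrow> nat \<Rightarrow> int) \<Rightarrow> nat \<Rightarrow> nat \<Rightarrow> (wt \<Rightarrow>\<^sub>0 int) \<Rightarrow> (wt \<Rightarrow>\<^sub>0 int)" where
  "demazure_bar A r i f = demazure A r i f - f"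

definition demazure_bar_w :: "(nat \<Rightarrow> nat \<Rightarrow> int) \<Rightarrow> nat \<Rightarrow> (wt \<Rightarrow> wt) \<Rightarrow> (wt \<Rightarrow>\<^sub>0 int) \<Rightarrow> (wt \<Rightarrow>\<^sub>0 int)" where
  "demazure_bar_w A r w = foldr (\<lambda>i g. demazure_bar A r i \<circ> g) (SOME ws. reduced_word A r w ws) id"

definition fund_sum :: "nat \<Rightarrow> nat set \<Rightarrow> wt" where
  "fund_sum r I = (\<lambda>i. if i \<in> I \<inter> {1..r} then 1 else 0)"

definition descent_monomial :: "(nat \<Rightarrow> nat \<Rightarrow> int) \<Rightarrow> nat \<Rightarrow> (wt \<Rightarrow> wt) \<Rightarrow> (wt \<Rightarrow>\<^sub>0 int)" where
  "descent_monomial A r u = Poly_Mapping.single (u (fund_sum r (descents A r u))) 1"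

definition is_descent_monomial :: "(nat \<Rightarrow> nat \<Rightarrow> int) \<Rightarrow> nat \<Rightarrow> (wt \<Rightarrow>\<^sub>0 int) \<Rightarrow> bool" where
  "is_descent_monomial A r m \<longleftrightarrow> (\<exists>u\<in>weyl A r. m = descent_monomial A r u)"

definition weight_le :: "(nat \<Rightarrow> nat \<Rightarrow> int) \<Rightarrow> nat \<Rightarrow> wt \<Rightarrow> wt \<Rightarrow> bool" where
  "weight_le A r lam mu \<longleftrightarrow>
     (\<exists>n :: nat \<Rightarrow> nat. mu - lam = (\<lambda>k. \<Sum>j\<in>{1..r}. int (n j) * sroot A r j k))"

definition weight_less :: "(nat \<Rightarrow> nat \<Rightarrow> int) \<Rightarrow> nat \<Rightarrow> wt \<Rightarrow> wt \<Rightarrow> bool" where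
  "weight_less A r lam mu \<longleftrightarrow> weight_le A r lam mu \<and> lam \<noteq> mu"

definition dominant :: "nat \<Rightarrow> wt \<Rightarrow> bool" where
  "dominant r mu \<longleftrightarrow> in_lattice r mu \<and> (\<forall>i\<in>{1..r}. 0 \<le> mu i)"

definition dom_rep :: "(nat \<Rightarrow> nat \<Rightarrow> int) \<Rightarrow> nat \<Rightarrow> wt \<Rightarrow> wt" where
  "dom_rep A r lam = (THE mu. dominant r mu \<and> (\<exists>w\<in>weyl A r. w lam = mu))"

definition is_composition :: "nat \<Rightarrow> nat list \<Rightarrow> bool" where
  "is_composition n al \<longleftrightarrow> (\<forall>a\<in>set al. 0 < a) \<and> sum_list al = n"

definition comp_descents :: "nat list \<Rightarrow> nat set" where
  "comp_descents al = {sum_list (take k al) | k. 1 \<le> k \<and> k < length al}"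

end

theory Submission
  imports Defs
begin

text \<open>
  The key fact is the positivity of roots: if \<open>\<ell>(w s\<^sub>i) > \<ell>(w)\<close> then \<open>w \<gamma>\<^sub>i\<close> is a nonnegative
  combination of simple roots. It is proved from the Cartan matrix alone. Averaging over the finite
  group \<open>W\<close> gives a \<open>W\<close>-invariant positive definite form \<open>B\<close>, which forces
  \<open>A\<^sub>i\<^sub>j A\<^sub>j\<^sub>i \<le> 3\<close>; the resulting six rank 2 cases are checked by computation, and the general case
  reduces to dihedral subgroups. Consequently \<open>\<lambda> - v \<lambda> \<ge> 0\<close> for dominant \<open>\<lambda>\<close>, and each orbit
  contains exactly one dominant weight.

  For the expansion, write \<open>w = s\<^sub>i w'\<close> reduced and \<open>\<mu> = w' \<lambda>\<^sub>\<alpha>\<close>. Since \<open>D(w) \<subseteq> D(\<alpha>)\<close>,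
  \<open>m = \<langle>\<mu>, \<gamma>\<^sub>i\<^sup>\<or>\<rangle> > 0\<close>, and \<open>\<pi>\<^sub>i e\<^sup>\<mu> = e\<^bsup>s\<^sub>i \<mu>\<^esup> + \<Sum>\<^sub>0\<^sub><\<^sub>k\<^sub><\<^sub>m e\<^bsup>\<mu> - k \<gamma>\<^sub>i\<^esup>\<close>.
  Every monomial that \<open>\<pi>\<^sub>i\<close> produces from \<open>e\<^sup>\<nu>\<close> lies on the \<open>\<gamma>\<^sub>i\<close>-string through \<open>\<nu>\<close>,
  whose points have their whole orbit below \<open>\<lambda>\<^sub>\<alpha>\<close> if \<open>\<nu>\<close> and \<open>s\<^sub>i \<nu>\<close> do, and are not longer
  than \<open>\<nu>\<close> for \<open>B\<close>, strictly so in the interior. Hence all lower terms have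
  \<open>[\<lambda>]\<^sub>+ \<le> \<lambda>\<^sub>\<alpha>\<close> and \<open>B(\<lambda>, \<lambda>) < B(\<lambda>\<^sub>\<alpha>, \<lambda>\<^sub>\<alpha>)\<close>. Finally, if \<open>e\<^bsup>w \<lambda>\<^sub>\<alpha>\<^esup> = z\<^sub>u\<close>, then
  \<open>D(u) = D(\<alpha>)\<close> by uniqueness of dominant representatives, and \<open>u\<^sup>-\<^sup>1 w\<close> is a stabiliser of
  \<open>\<lambda>\<^sub>\<alpha>\<close> that cannot have a descent, so \<open>u = w\<close>.
\<close>

definition smul :: "int \<Rightarrow> wt \<Rightarrow> wt" where
  "smul c x = (\<lambda>k. c * x k)"

lemma smul_apply [simp]: "smul c x k = c * x k"
  by (simp add: smul_def)

lemma smul_0 [simp]: "smul 0 x = 0"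
  by (simp add: fun_eq_iff)

lemma smul_minus_one: "smul (-1) x = - x"
  by (simp add: fun_eq_iff)

lemma smul_diff_left: "smul (a - b) x = smul a x - smul b x"
  by (simp add: fun_eq_iff algebra_simps)

lemma smul_minus_minus: "smul (- c) (- x) = smul c x"
  by (simp add: fun_eq_iff)

lemma word_map_Nil [simp]: "word_map A r [] = id"
  by (simp add: word_map_def)

lemma word_map_Cons [simp]: "word_map A r (i # ws) = sref A r i \<circ> word_map A r ws"
  by (simp add: word_map_def)

lemma word_map_append: "word_map A r (xs @ ys) = word_map A r xs \<circ> word_map A r ys"
  by (induction xs) auto

lemma sref_apply: "sref A r i x k = x k - x i * sroot A r i k"
  by (simp add: sref_def)

lemma sref_add: "sref A r i (x + y) = sref A r i x + sref A r i y"
  by (simp add: fun_eq_iff sref_apply algebra_simps)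

lemma sref_smul: "sref A r i (smul c x) = smul c (sref A r i x)"
  by (simp add: fun_eq_iff sref_apply algebra_simps)

text \<open>\<open>alt_word s t k\<close> is the alternating word \<open>\<dots> s t s t\<close> of length \<open>k\<close>, ending in \<open>t\<close>.\<close>
primrec alt_word :: "nat \<Rightarrow> nat \<Rightarrow> nat \<Rightarrow> nat list" where
  "alt_word s t 0 = []"
| "alt_word s t (Suc n) = (if even n then t else s) # alt_word s t n"

lemma length_alt_word [simp]: "length (alt_word s t k) = k"
  by (induction k) auto

lemma alt_word_numeral [simp]:
  "alt_word s t (numeral n)
    = (if even (pred_numeral n) then t else s) # alt_word s t (pred_numeral n)"
  by (simp add: numeral_eq_Suc)

lemma all_less_numeral: "(\<forall>k<numeral n. P k) \<longleftrightarrow> P (pred_numeral n) \<and> (\<forall>k<pred_numeral n. P k)"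
  by (simp add: numeral_eq_Suc All_less_Suc)

lemma set_alt_word: "set (alt_word s t k) \<subseteq> {s, t}"
  by (induction k) auto

lemma alt_word_suffix: "m \<le> k \<Longrightarrow> \<exists>pre. alt_word s t k = pre @ alt_word s t m"
proof (induction k)
  case (Suc k)
  then show ?case
    by (cases "m = Suc k") (auto intro: exI[of _ "[]"] exI[of _ "_ # _"])
qed simp

lemma alt_word_last: "m \<ge> 1 \<Longrightarrow> \<exists>pre. alt_word s t m = pre @ [t]"
  using alt_word_suffix[of 1 m s t] by simp

lemma alternating_eq_alt_word:
  assumes "s \<noteq> t" "set ws \<subseteq> {s, t}" "\<nexists>xs a ys. ws = xs @ a # a # ys" "ws = [] \<or> last ws = t"
  shows "ws = alt_word s t (length ws)"
  using assms(2-4)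
proof (induction ws)
  case (Cons a ws')
  show ?case
  proof (cases "ws' = []")
    case False
    have "\<nexists>xs b ys. ws' = xs @ b # b # ys"
      using Cons.prems(2) by (metis append_Cons)
    then have "ws' = alt_word s t (length ws')"
      using Cons False by auto
    then obtain n where n: "length ws' = Suc n" "ws' = (if even n then t else s) # alt_word s t n"
      using False by (cases "length ws'") auto
    have "a \<noteq> (if even n then t else s)"
      using Cons.prems(2) n(2) by (metis append_Nil)
    then have "a = (if even (Suc n) then t else s)"
      using Cons.prems(1) assms(1) by auto
    with n show ?thesis by simp
  qed (use Cons.prems in simp)
qed simp

lemma cartan_pair_cases:
  fixes a b :: int
  assumes "a \<le> 0" "b \<le> 0" "a * b \<le> 3" "a = 0 \<longleftrightarrow> b = 0"
  shows "(a, b) \<in> {(0, 0), (-1, -1), (-1, -2), (-2, -1), (-1, -3), (-3, -1)}"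
proof -
  have "-a \<le> 3 \<and> -b \<le> 3"
  proof (cases "a = 0")
    case False
    then have "-a \<le> (-a) * (-b) \<and> -b \<le> (-b) * (-a)"
      using assms mult_left_mono[of 1 "-b" "-a"] mult_left_mono[of 1 "-a" "-b"] by auto
    then show ?thesis
      using assms(3) by (simp add: mult.commute)
  qed (use assms in simp)
  then have "a \<in> {-3, -2, -1, 0}" "b \<in> {-3, -2, -1, 0}"
    using assms(1,2) by auto
  then show ?thesis
    using assms by auto
qed

lemma lookup_frag_of_times:
  fixes h :: "'a::ab_group_add \<Rightarrow>\<^sub>0 int"
  shows "Poly_Mapping.lookup (frag_of a * h) v = Poly_Mapping.lookup h (v - a)"
proof -
  have "Poly_Mapping.lookup (frag_of a * h) v
      = (\<Sum>l. (\<Sum>q. Poly_Mapping.lookup h q when v = l + q) when l = a)"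
    by (simp only: lookup_mult lookup_single) (rule Sum_any.cong, simp add: when_def)
  also have "\<dots> = (\<Sum>q. Poly_Mapping.lookup h q when v = a + q)"
    by (rule Sum_any_when_equal)
  also have "\<dots> = (\<Sum>q. Poly_Mapping.lookup h q when q = v - a)"
    by (rule Sum_any.cong) (auto simp: when_def)
  finally show ?thesis
    by (simp only: Sum_any_when_equal)
qed

text \<open>Compare the coefficients at a key of \<open>h\<close> with maximal \<open>k\<close>-th coordinate.\<close>
lemma one_minus_frag_of_times_eq_0:
  fixes a :: wt and h :: "wt \<Rightarrow>\<^sub>0 int"
  assumes "a k < 0" and "(1 - frag_of a) * h = 0"
  shows "h = 0"
proof (rule ccontr)
  assume "h \<noteq> 0"
  define M where "M = Max ((\<lambda>v. v k) ` Poly_Mapping.keys h)"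
  have "M \<in> (\<lambda>v. v k) ` Poly_Mapping.keys h"
    unfolding M_def using \<open>h \<noteq> 0\<close> by (intro Max_in) auto
  then obtain v where v: "v \<in> Poly_Mapping.keys h" "v k = M"
    by auto
  have "v - a \<notin> Poly_Mapping.keys h"
  proof
    assume "v - a \<in> Poly_Mapping.keys h"
    then have "(v - a) k \<in> (\<lambda>v. v k) ` Poly_Mapping.keys h"
      by (rule image_eqI[OF refl])
    then have "(v - a) k \<le> M"
      unfolding M_def by (intro Max_ge) auto
    then show False
      using v(2) assms(1) by simp
  qed
  moreover have "Poly_Mapping.lookup h v - Poly_Mapping.lookup h (v - a) = 0"
    using arg_cong[OF assms(2), of "\<lambda>p. Poly_Mapping.lookup p v"]
    by (simp add: left_diff_distrib lookup_minus lookup_frag_of_times)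
  ultimately show False
    using v(1) by (simp add: in_keys_iff)
qed

lemma frag_extend_diff_fun:
  "frag_extend (\<lambda>x. f x - g x) c = frag_extend f c - frag_extend g c"
  by (induction c rule: frag_induction[OF subset_UNIV]) (simp_all add: frag_extend_diff)

lemma comp_descents_subset:
  assumes "is_composition (r + 1) al"
  shows "comp_descents al \<subseteq> {1..r}"
proof
  fix x
  assume "x \<in> comp_descents al"
  then obtain k where k: "1 \<le> k" "k < length al" "x = sum_list (take k al)"
    unfolding comp_descents_def by auto
  have pos: "\<forall>a\<in>set al. 0 < a" "sum_list al = r + 1"
    using assms unfolding is_composition_def by auto
  have pos_sum: "sum_list xs \<ge> 1" if "set xs \<subseteq> set al" "xs \<noteq> []" for xs
    using that pos(1) by (cases xs) auto
  have "take k al \<noteq> []" "drop k al \<noteq> []"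
    using k by auto
  then have "sum_list (take k al) \<ge> 1" "sum_list (drop k al) \<ge> 1"
    using pos_sum[OF set_take_subset] pos_sum[OF set_drop_subset] by auto
  moreover have "sum_list (take k al) + sum_list (drop k al) = r + 1"
    using pos(2) by (metis append_take_drop_id sum_list_append)
  ultimately show "x \<in> {1..r}"
    using k by auto
qed

section \<open>Weyl group and length\<close>

locale finite_root_datum =
  fixes A :: "nat \<Rightarrow> nat \<Rightarrow> int" and r :: nat
  assumes root_datum: "root_datum A r"
begin

abbreviation "R \<equiv> {1..r}"
abbreviation "W \<equiv> weyl A r"
abbreviation "sr \<equiv> sref A r"
abbreviation "\<gamma> \<equiv> sroot A r"
abbreviation "wm \<equiv> word_map A r"

lemma finite_W: "finite W"
  using root_datum by (simp add: root_datum_def)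

lemma cartan_diag: "i \<in> R \<Longrightarrow> A i i = 2"
  using root_datum by (simp add: root_datum_def is_gcm_def)

lemma cartan_offdiag_nonpos: "i \<in> R \<Longrightarrow> j \<in> R \<Longrightarrow> i \<noteq> j \<Longrightarrow> A i j \<le> 0"
  using root_datum by (simp add: root_datum_def is_gcm_def)

lemma cartan_zero_sym: "i \<in> R \<Longrightarrow> j \<in> R \<Longrightarrow> A i j = 0 \<longleftrightarrow> A j i = 0"
  using root_datum by (simp add: root_datum_def is_gcm_def)

lemma sroot_apply: "\<gamma> j k = (if k \<in> R then A k j else 0)"
  by (simp add: sroot_def)

lemma sroot_self: "i \<in> R \<Longrightarrow> \<gamma> i i = 2"
  by (simp add: sroot_apply cartan_diag)

lemma sroot_nonzero: "i \<in> R \<Longrightarrow> \<gamma> i \<noteq> 0"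
  using sroot_self by (metis zero_fun_def zero_neq_numeral)

lemma sref_eq: "sr i x = x - smul (x i) (\<gamma> i)"
  by (simp add: fun_eq_iff sref_apply)

lemma sref_self_coord: "i \<in> R \<Longrightarrow> sr i x i = - x i"
  by (simp add: sref_apply sroot_self)

lemma sref_sref [simp]: "i \<in> R \<Longrightarrow> sr i (sr i x) = x"
  by (simp add: fun_eq_iff sref_apply sref_self_coord) (simp add: sroot_self algebra_simps)

lemma sref_sroot: "i \<in> R \<Longrightarrow> sr i (\<gamma> i) = - \<gamma> i"
  by (auto simp: fun_eq_iff sref_apply sroot_self)

lemma sref_cancel_left [simp]: "i \<in> R \<Longrightarrow> sr i \<circ> (sr i \<circ> w) = w"
  by (simp add: fun_eq_iff)

lemma sref_cancel_right [simp]: "i \<in> R \<Longrightarrow> w \<circ> sr i \<circ> sr i = w"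
  by (simp add: fun_eq_iff)

lemma weyl_iff_word: "w \<in> W \<longleftrightarrow> (\<exists>ws. set ws \<subseteq> R \<and> w = wm ws)"
proof
  assume "w \<in> W"
  then show "\<exists>ws. set ws \<subseteq> R \<and> w = wm ws"
  proof induction
    case weyl_id
    show ?case by (intro exI[of _ "[]"]) auto
  next
    case (weyl_step i w)
    then obtain ws where "set ws \<subseteq> R" "w = wm ws" by auto
    with weyl_step show ?case by (intro exI[of _ "i # ws"]) auto
  qed
next
  have "set ws \<subseteq> R \<Longrightarrow> wm ws \<in> W" for ws
    by (induction ws) (auto intro: weyl.intros simp: id_def[symmetric])
  then show "\<exists>ws. set ws \<subseteq> R \<and> w = wm ws \<Longrightarrow> w \<in> W" by auto
qed

lemma word_map_in_weyl: "set ws \<subseteq> R \<Longrightarrow> wm ws \<in> W"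
  using weyl_iff_word by auto

lemma weyl_comp: "u \<in> W \<Longrightarrow> v \<in> W \<Longrightarrow> u \<circ> v \<in> W"
  unfolding weyl_iff_word by (metis le_sup_iff set_append word_map_append)

lemma sref_in_weyl: "i \<in> R \<Longrightarrow> sr i \<in> W"
  using word_map_in_weyl[of "[i]"] by auto

lemma word_map_rev_comp: "set ws \<subseteq> R \<Longrightarrow> wm (rev ws) \<circ> wm ws = id"
  by (induction ws) (auto simp: word_map_append o_assoc fun_eq_iff)

lemma inv_word_map: "set ws \<subseteq> R \<Longrightarrow> inv (wm ws) = wm (rev ws)"
  by (metis inv_unique_comp rev_rev_ident set_rev word_map_rev_comp)

lemma weyl_inv: "w \<in> W \<Longrightarrow> inv w \<in> W \<and> w \<circ> inv w = id \<and> inv w \<circ> w = id"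
  unfolding weyl_iff_word
  by (metis inv_word_map rev_rev_ident set_rev word_map_rev_comp)

lemma weyl_inv_in: "w \<in> W \<Longrightarrow> inv w \<in> W"
  using weyl_inv by blast

lemma weyl_inv_left [simp]: "w \<in> W \<Longrightarrow> inv w (w x) = x"
  using weyl_inv by (metis comp_apply id_apply)

lemma weyl_inv_right [simp]: "w \<in> W \<Longrightarrow> w (inv w x) = x"
  using weyl_inv by (metis comp_apply id_apply)

lemma weyl_inv_comp: "u \<in> W \<Longrightarrow> v \<in> W \<Longrightarrow> inv (u \<circ> v) = inv v \<circ> inv u"
  by (rule inv_unique_comp) (simp_all add: fun_eq_iff)

lemma inv_sref: "i \<in> R \<Longrightarrow> inv (sr i) = sr i"
  by (rule inv_unique_comp) (simp_all add: fun_eq_iff)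

lemma weyl_add: "w \<in> W \<Longrightarrow> w (x + y) = w x + w y"
  by (induction rule: weyl.induct) (simp_all only: comp_apply id_apply sref_add)

lemma weyl_smul: "w \<in> W \<Longrightarrow> w (smul c x) = smul c (w x)"
  by (induction rule: weyl.induct) (simp_all only: comp_apply id_apply sref_smul)

lemma weyl_zero: "w \<in> W \<Longrightarrow> w 0 = 0"
  using weyl_smul[of w 0 0] by simp

lemma weyl_neg:
  assumes "w \<in> W"
  shows "w (- x) = - w x"
  using weyl_smul[OF assms, of "-1" x] by (simp only: smul_minus_one)

lemma weyl_diff: "w \<in> W \<Longrightarrow> w (x - y) = w x - w y"
  using weyl_add[of w x "- y"] weyl_neg[of w y] by simp

lemma weyl_sum:
  assumes "w \<in> W"
  shows "w (\<Sum>j\<in>S. v j) = (\<Sum>j\<in>S. w (v j))"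
proof (induction S rule: infinite_finite_induct)
  case (insert j F)
  then show ?case
    by (simp only: sum.insert[OF insert.hyps] weyl_add[OF assms])
qed (simp_all only: sum.infinite sum.empty weyl_zero[OF assms] not_False_eq_True)

lemma weyl_nonzero: "w \<in> W \<Longrightarrow> x \<noteq> 0 \<Longrightarrow> w x \<noteq> 0"
  by (metis weyl_inv_left weyl_zero)

lemma sref_lattice: "in_lattice r x \<Longrightarrow> in_lattice r (sr i x)"
  unfolding in_lattice_def by (simp add: sref_apply sroot_apply)

lemma weyl_lattice: "w \<in> W \<Longrightarrow> in_lattice r x \<Longrightarrow> in_lattice r (w x)"
  by (induction rule: weyl.induct) (simp_all add: sref_lattice)

definition generated :: "nat set \<Rightarrow> (wt \<Rightarrow> wt) \<Rightarrow> bool" where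
  "generated S v \<longleftrightarrow> (\<exists>ws. set ws \<subseteq> S \<and> wm ws = v)"

definition parlen :: "nat set \<Rightarrow> (wt \<Rightarrow> wt) \<Rightarrow> nat" where
  "parlen S v = (LEAST n. \<exists>ws. set ws \<subseteq> S \<and> length ws = n \<and> wm ws = v)"

abbreviation "len \<equiv> parlen R"

lemma wlen_eq_len: "wlen A r = len"
  by (simp add: fun_eq_iff wlen_def parlen_def)

lemma generated_R_iff: "generated R w \<longleftrightarrow> w \<in> W"
  unfolding generated_def weyl_iff_word by auto

lemma generated_mono: "S \<subseteq> S' \<Longrightarrow> generated S v \<Longrightarrow> generated S' v"
  unfolding generated_def by blast

lemma generated_sref: "i \<in> S \<Longrightarrow> generated S (sr i)"
  unfolding generated_def by (intro exI[of _ "[i]"]) auto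

lemma generated_comp: "generated S u \<Longrightarrow> generated S v \<Longrightarrow> generated S (u \<circ> v)"
  unfolding generated_def by (metis le_sup_iff set_append word_map_append)

lemma parlen_le_length: "set ws \<subseteq> S \<Longrightarrow> parlen S (wm ws) \<le> length ws"
  unfolding parlen_def by (rule Least_le) auto

lemma parlen_obtain:
  assumes "generated S v"
  obtains ws where "set ws \<subseteq> S" "wm ws = v" "length ws = parlen S v"
proof -
  have "\<exists>n ws. set ws \<subseteq> S \<and> length ws = n \<and> wm ws = v"
    using assms unfolding generated_def by auto
  from LeastI_ex[OF this] show ?thesis
    using that unfolding parlen_def by auto
qed

lemma parlen_comp: "generated S u \<Longrightarrow> generated S v \<Longrightarrow> parlen S (u \<circ> v) \<le> parlen S u + parlen S v"
  by (metis length_append parlen_le_length parlen_obtain set_append le_sup_iff word_map_append)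

lemma parlen_eq_0: "generated S v \<Longrightarrow> parlen S v = 0 \<Longrightarrow> v = id"
  by (metis length_0_conv parlen_obtain word_map_Nil)

lemma parlen_sref: "i \<in> S \<Longrightarrow> parlen S (sr i) \<le> 1"
  using parlen_le_length[of "[i]" S] by simp

lemma parlen_sref_eq_1:
  assumes "i \<in> S" "i \<in> R"
  shows "parlen S (sr i) = 1"
proof -
  have "sr i (\<gamma> i) i \<noteq> \<gamma> i i"
    using sref_self_coord[OF assms(2)] sroot_self[OF assms(2)] by simp
  then have "parlen S (sr i) \<noteq> 0"
    using parlen_eq_0[OF generated_sref[OF assms(1)]] by force
  then show ?thesis
    using parlen_sref[OF assms(1)] by simp
qed

lemma parlen_mono: "S \<subseteq> S' \<Longrightarrow> generated S v \<Longrightarrow> parlen S' v \<le> parlen S v"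
  by (metis order_trans parlen_le_length parlen_obtain)

lemma len_comp: "u \<in> W \<Longrightarrow> v \<in> W \<Longrightarrow> len (u \<circ> v) \<le> len u + len v"
  using parlen_comp generated_R_iff by auto

lemma len_inv: "w \<in> W \<Longrightarrow> len (inv w) = len w"
proof -
  have le: "len (inv u) \<le> len u" if "u \<in> W" for u
  proof -
    obtain us where "set us \<subseteq> R" "wm us = u" "length us = len u"
      using parlen_obtain \<open>u \<in> W\<close> generated_R_iff by metis
    then show ?thesis
      using parlen_le_length[of "rev us" R] inv_word_map by auto
  qed
  assume w: "w \<in> W"
  then have "inv (inv w) = w"
    using weyl_inv[OF w] inv_unique_comp[of "inv w" w] by blast
  then show ?thesis
    using le[OF w] le[OF weyl_inv_in[OF w]] by simp
qed

lemma len_sref_left: "i \<in> R \<Longrightarrow> w \<in> W \<Longrightarrow> len (sr i \<circ> w) \<le> len w + 1"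
  using len_comp[of "sr i" w] parlen_sref[of i R] sref_in_weyl by auto

lemma len_sref_right: "i \<in> R \<Longrightarrow> w \<in> W \<Longrightarrow> len (w \<circ> sr i) \<le> len w + 1"
  using len_comp[of w "sr i"] parlen_sref[of i R] sref_in_weyl by auto

lemma len_eq_0: "w \<in> W \<Longrightarrow> len w = 0 \<Longrightarrow> w = id"
  using parlen_eq_0 generated_R_iff by auto

lemma len_split_first:
  assumes "w \<in> W" "len w > 0"
  obtains i w' where "i \<in> R" "w' \<in> W" "w = sr i \<circ> w'" "len w' + 1 = len w"
proof -
  obtain ws where ws: "set ws \<subseteq> R" "wm ws = w" "length ws = len w"
    using parlen_obtain assms generated_R_iff by metis
  then obtain i ws' where "ws = i # ws'"
    using assms by (cases ws) auto
  with ws have "i \<in> R" "wm ws' \<in> W" "w = sr i \<circ> wm ws'" "len (wm ws') \<le> length ws'"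
    using word_map_in_weyl parlen_le_length by auto
  moreover have "len w \<le> len (wm ws') + 1"
    using len_sref_left calculation by simp
  ultimately show ?thesis
    using that ws \<open>ws = i # ws'\<close> by simp
qed

lemma len_split_last:
  assumes "w \<in> W" "len w > 0"
  obtains i w' where "i \<in> R" "w' \<in> W" "w = w' \<circ> sr i" "len w' + 1 = len w"
proof -
  obtain ws where ws: "set ws \<subseteq> R" "wm ws = w" "length ws = len w"
    using parlen_obtain assms generated_R_iff by metis
  then obtain i ws' where "ws = ws' @ [i]"
    using assms by (cases ws rule: rev_cases) auto
  with ws have "i \<in> R" "wm ws' \<in> W" "w = wm ws' \<circ> sr i" "len (wm ws') \<le> length ws'"
    using word_map_in_weyl parlen_le_length by (auto simp: word_map_append)
  moreover have "len w \<le> len (wm ws') + 1"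
    using len_sref_right calculation by simp
  ultimately show ?thesis
    using that ws \<open>ws = ws' @ [i]\<close> by simp
qed

lemma reduced_wordD:
  "reduced_word A r w ws \<Longrightarrow> length ws = len w \<and> w \<in> W \<and> w = wm ws \<and> set ws \<subseteq> R"
  unfolding reduced_word_def wlen_eq_len using word_map_in_weyl by auto

lemma reduced_word_exists: "w \<in> W \<Longrightarrow> \<exists>ws. reduced_word A r w ws"
  unfolding reduced_word_def wlen_eq_len by (metis generated_R_iff parlen_obtain)

lemma reduced_word_Cons:
  assumes "reduced_word A r w (i # ws)"
  shows "i \<in> R \<and> reduced_word A r (wm ws) ws \<and> w = sr i \<circ> wm ws"
proof -
  have i: "i \<in> R" "set ws \<subseteq> R" "w = sr i \<circ> wm ws" "Suc (length ws) = len w"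
    using assms unfolding reduced_word_def wlen_eq_len by auto
  have "len w \<le> len (wm ws) + 1"
    using len_sref_left[of i "wm ws"] i word_map_in_weyl by auto
  moreover have "len (wm ws) \<le> length ws"
    using parlen_le_length i by auto
  ultimately show ?thesis
    using i unfolding reduced_word_def wlen_eq_len by auto
qed

section \<open>An invariant form\<close>

text \<open>Averaging over the finite group \<open>W\<close> makes \<open>B\<close> invariant; it is positive definite on the
  lattice because the term \<open>u = id\<close> is.\<close>
definition B :: "wt \<Rightarrow> wt \<Rightarrow> int" where
  "B x y = (\<Sum>u\<in>W. \<Sum>k\<in>R. u x k * u y k)"

lemma B_sym: "B x y = B y x"
  unfolding B_def by (simp add: mult.commute)

lemma B_add_left: "B (x + y) z = B x z + B y z"
  unfolding B_def by (simp add: weyl_add sum.distrib[symmetric] algebra_simps cong: sum.cong)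

lemma B_smul_left: "B (smul c x) y = c * B x y"
  unfolding B_def by (simp add: weyl_smul sum_distrib_left algebra_simps cong: sum.cong)

lemma B_add_right: "B z (x + y) = B z x + B z y"
  using B_add_left B_sym by metis

lemma B_smul_right: "B y (smul c x) = c * B y x"
  using B_smul_left B_sym by metis

lemma B_neg_right: "B y (- x) = - B y x"
  using B_smul_right[of y "-1" x] by (simp only: smul_minus_one mult_minus1)

lemma B_diff_left: "B (x - y) z = B x z - B y z"
  using B_add_left[of x "-y" z] B_smul_left[of "-1" y z] by (simp only: smul_minus_one) simp

lemma B_diff_right: "B z (x - y) = B z x - B z y"
  using B_diff_left B_sym by metis

lemma B_zero_right: "B y 0 = 0"
  using B_smul_right[of y 0 0] by simp

lemma B_sum_right: "B y (\<Sum>j\<in>S. v j) = (\<Sum>j\<in>S. B y (v j))"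
proof (induction S rule: infinite_finite_induct)
  case (insert j F)
  then show ?case
    by (simp only: sum.insert[OF insert.hyps] B_add_right)
qed (simp_all only: sum.infinite sum.empty B_zero_right not_False_eq_True)

lemma B_weyl_invariant:
  assumes "v \<in> W"
  shows "B (v x) (v y) = B x y"
proof -
  have "bij_betw (\<lambda>u. u \<circ> v) W W"
    by (rule bij_betw_byWitness[where f' = "\<lambda>u. u \<circ> inv v"])
      (use assms weyl_comp weyl_inv_in weyl_inv in \<open>auto simp: o_assoc[symmetric]\<close>)
  then show ?thesis
    unfolding B_def using sum.reindex_bij_betw[of "\<lambda>u. u \<circ> v" W W "\<lambda>u. \<Sum>k\<in>R. u x k * u y k"]
    by simp
qed

lemma B_self_ge: "B x x \<ge> (\<Sum>k\<in>R. x k * x k)"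
proof -
  have "(\<Sum>k\<in>R. x k * x k) = (\<Sum>u\<in>{id}. \<Sum>k\<in>R. u x k * u x k)"
    by simp
  also have "\<dots> \<le> B x x"
    unfolding B_def by (rule sum_mono2[OF finite_W]) (auto intro: weyl.intros sum_nonneg)
  finally show ?thesis .
qed

lemma B_self_nonneg: "B x x \<ge> 0"
  using B_self_ge[of x] sum_nonneg[of R "\<lambda>k. x k * x k"] by simp

lemma B_self_eq_0:
  assumes "B x x = 0" "k \<in> R"
  shows "x k = 0"
proof -
  have "(\<Sum>k\<in>R. x k * x k) = 0"
    using assms B_self_ge[of x] sum_nonneg[of R "\<lambda>k. x k * x k"] by simp
  then show ?thesis
    using assms sum_nonneg_eq_0_iff[of R "\<lambda>k. x k * x k"] by simp
qed

text \<open>The reflection \<open>s\<^sub>i\<close> is orthogonal for \<open>B\<close>, so \<open>B\<close> recovers the Cartan pairing: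
  \<open>\<langle>x, \<gamma>\<^sub>i\<^sup>\<or>\<rangle> = x\<^sub>i = 2 B(x, \<gamma>\<^sub>i) / B(\<gamma>\<^sub>i, \<gamma>\<^sub>i)\<close>.\<close>
lemma B_sroot: "i \<in> R \<Longrightarrow> 2 * B x (\<gamma> i) = x i * B (\<gamma> i) (\<gamma> i)"
proof -
  assume i: "i \<in> R"
  define y where "y = smul 2 x - smul (x i) (\<gamma> i)"
  have "sr i y = y"
    using sroot_self[OF i] by (simp add: fun_eq_iff sref_apply y_def)
  then have "B y (\<gamma> i) = B y (- \<gamma> i)"
    using B_weyl_invariant[OF sref_in_weyl[OF i], of y "\<gamma> i"] sref_sroot[OF i] by simp
  then have "B y (\<gamma> i) = 0"
    using B_neg_right by simp
  then show ?thesis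
    unfolding y_def by (simp add: B_diff_left B_smul_left)
qed

definition root_norm :: "nat \<Rightarrow> int" where
  "root_norm j = B (\<gamma> j) (\<gamma> j)"

lemma root_norm_pos: "j \<in> R \<Longrightarrow> root_norm j > 0"
  using B_self_eq_0[of "\<gamma> j" j] B_self_nonneg[of "\<gamma> j"] sroot_self
  unfolding root_norm_def by fastforce

lemma coord_root_norm: "i \<in> R \<Longrightarrow> x i * root_norm i = 2 * B x (\<gamma> i)"
  using B_sroot by (simp add: root_norm_def)

definition root_comb :: "(nat \<Rightarrow> nat) \<Rightarrow> wt" where
  "root_comb n = (\<lambda>k. \<Sum>j\<in>R. int (n j) * \<gamma> j k)"

definition Qplus :: "wt \<Rightarrow> bool" where
  "Qplus v \<longleftrightarrow> (\<exists>n. v = root_comb n)"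

lemma weight_le_iff_Qplus: "weight_le A r x y \<longleftrightarrow> Qplus (y - x)"
  unfolding weight_le_def Qplus_def root_comb_def by auto

lemma root_comb_eq_sum: "root_comb n = (\<Sum>j\<in>R. smul (int (n j)) (\<gamma> j))"
proof -
  have "(\<Sum>j\<in>S. smul (int (n j)) (\<gamma> j)) k = (\<Sum>j\<in>S. int (n j) * \<gamma> j k)" for S k
    by (induction S rule: infinite_finite_induct) auto
  then show ?thesis
    unfolding root_comb_def by auto
qed

lemma weyl_root_comb:
  assumes "u \<in> W"
  shows "u (root_comb n) = (\<Sum>j\<in>R. smul (int (n j)) (u (\<gamma> j)))"
  by (simp only: root_comb_eq_sum weyl_sum[OF assms] weyl_smul[OF assms])

lemma B_root_comb: "2 * B x (root_comb n) = (\<Sum>j\<in>R. int (n j) * x j * root_norm j)"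
proof -
  have "2 * B x (root_comb n) = (\<Sum>j\<in>R. int (n j) * (2 * B x (\<gamma> j)))"
    by (simp add: root_comb_eq_sum B_sum_right B_smul_right sum_distrib_left algebra_simps)
  also have "\<dots> = (\<Sum>j\<in>R. int (n j) * x j * root_norm j)"
    by (rule sum.cong) (auto simp: coord_root_norm)
  finally show ?thesis .
qed

lemma Qplus_zero: "Qplus 0"
  unfolding Qplus_def root_comb_def by (intro exI[of _ "\<lambda>_. 0"]) (simp add: fun_eq_iff)

lemma root_comb_add: "root_comb n + root_comb m = root_comb (\<lambda>j. n j + m j)"
  unfolding root_comb_def by (simp add: fun_eq_iff sum.distrib[symmetric] algebra_simps)

lemma Qplus_add: "Qplus v \<Longrightarrow> Qplus v' \<Longrightarrow> Qplus (v + v')"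
  unfolding Qplus_def using root_comb_add by metis

lemma Qplus_smul: "0 \<le> c \<Longrightarrow> Qplus v \<Longrightarrow> Qplus (smul c v)"
proof -
  assume "0 \<le> c" "Qplus v"
  then obtain m n where "c = int m" "v = root_comb n"
    unfolding Qplus_def by (metis nonneg_int_cases)
  then have "smul c v = root_comb (\<lambda>j. m * n j)"
    unfolding root_comb_def by (auto simp: fun_eq_iff sum_distrib_left algebra_simps)
  then show "Qplus (smul c v)"
    unfolding Qplus_def by blast
qed

lemma Qplus_add_smul: "Qplus a \<Longrightarrow> Qplus v \<Longrightarrow> 0 \<le> c \<Longrightarrow> Qplus (a + smul c v)"
  using Qplus_add Qplus_smul by blast

lemma Qplus_sum: "finite S \<Longrightarrow> (\<And>j. j \<in> S \<Longrightarrow> Qplus (f j)) \<Longrightarrow> Qplus (\<Sum>j\<in>S. f j)"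
  by (induction S rule: finite_induct) (auto intro: Qplus_add Qplus_zero)

lemma Qplus_sroot:
  assumes "i \<in> R"
  shows "Qplus (\<gamma> i)"
proof -
  have "(\<Sum>j\<in>R. int (if j = i then 1 else 0) * \<gamma> j k) = (\<Sum>j\<in>R. if j = i then \<gamma> j k else 0)" for k
    by (rule sum.cong) auto
  then have "\<gamma> i = root_comb (\<lambda>j. if j = i then 1 else 0)"
    using assms unfolding root_comb_def by (simp add: fun_eq_iff)
  then show ?thesis
    unfolding Qplus_def by blast
qed

lemma fund_sum_dominant: "dominant r (fund_sum r J)"
  unfolding dominant_def in_lattice_def fund_sum_def by auto

lemma fund_sum_apply: "j \<in> R \<Longrightarrow> fund_sum r J j = (if j \<in> J then 1 else 0)"
  unfolding fund_sum_def by auto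

lemma B_dominant_Qplus_nonneg:
  assumes "dominant r d" "Qplus v"
  shows "B d v \<ge> 0"
proof -
  obtain n where "v = root_comb n"
    using assms unfolding Qplus_def by auto
  moreover have "(\<Sum>j\<in>R. int (n j) * d j * root_norm j) \<ge> 0"
    using assms root_norm_pos unfolding dominant_def
    by (intro sum_nonneg) (simp add: order.strict_implies_order)
  ultimately show ?thesis
    using B_root_comb[of d n] by simp
qed

lemma B_dominant_root_comb_eq_0:
  assumes "dominant r d" "B d (root_comb n) = 0" "k \<in> R" "d k > 0"
  shows "n k = 0"
proof -
  have "\<forall>j\<in>R. int (n j) * d j * root_norm j \<ge> 0"
    using assms root_norm_pos unfolding dominant_def by (simp add: order.strict_implies_order)
  moreover have "(\<Sum>j\<in>R. int (n j) * d j * root_norm j) = 0"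
    using B_root_comb[of d n] assms by simp
  ultimately have "\<forall>j\<in>R. int (n j) * d j * root_norm j = 0"
    by (subst sum_nonneg_eq_0_iff[symmetric]) auto
  then show ?thesis
    using assms root_norm_pos[OF assms(3)] by auto
qed

lemma Qplus_antisym:
  assumes "Qplus v" "Qplus (- v)"
  shows "v = 0"
proof -
  obtain n where n: "v = root_comb n"
    using assms unfolding Qplus_def by auto
  have "B (fund_sum r R) v = 0"
    using B_dominant_Qplus_nonneg[OF fund_sum_dominant[of R] assms(1)]
      B_dominant_Qplus_nonneg[OF fund_sum_dominant[of R] assms(2)] B_neg_right by fastforce
  then have "n j = 0" if "j \<in> R" for j
    using B_dominant_root_comb_eq_0[OF fund_sum_dominant[of R] _ that] n that
      by (simp add: fund_sum_apply)
  then show ?thesis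
    using n unfolding root_comb_def by (simp add: fun_eq_iff)
qed

section \<open>Positivity of roots\<close>

lemma cartan_product_le_3:
  assumes i: "i \<in> R" and j: "j \<in> R" and ij: "i \<noteq> j"
  shows "A i j * A j i \<le> 3"
proof -
  define P Q C where "P = root_norm i" and "Q = root_norm j" and "C = B (\<gamma> i) (\<gamma> j)"
  have P: "P > 0" "Q > 0"
    using root_norm_pos i j P_def Q_def by auto
  have C1: "2 * C = A j i * Q"
    using coord_root_norm[OF j, of "\<gamma> i"] j by (simp add: C_def Q_def sroot_apply)
  have C2: "2 * C = A i j * P"
    using coord_root_norm[OF i, of "\<gamma> j"] i by (simp add: C_def P_def sroot_apply B_sym)
  have "C \<le> 0"
    using C2 cartan_offdiag_nonpos[OF i j ij] P mult_nonpos_nonneg[of "A i j" P] by linarith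
  define v where "v = smul Q (\<gamma> i) - smul C (\<gamma> j)"
  have Bv: "B v v = Q * (P * Q - C * C)"
    unfolding v_def
    by (simp add: B_diff_left B_diff_right B_smul_left B_smul_right P_def Q_def C_def root_norm_def
        B_sym algebra_simps)
  then have PQC: "C * C \<le> P * Q"
    using B_self_nonneg[of v] P by (simp add: zero_le_mult_iff)
  have "4 * (C * C) = (A i j * P) * (A j i * Q)"
    using arg_cong2[OF C2 C1, of times] by (simp add: algebra_simps)
  then have four: "4 * (C * C) = (A i j * A j i) * (P * Q)"
    by (simp add: ac_simps)
  text \<open>Equality \<open>A\<^sub>i\<^sub>j A\<^sub>j\<^sub>i = 4\<close> would make \<open>B\<close> degenerate on \<open>v\<close>, but \<open>v\<close> has
    positive pairing with \<open>\<rho> = \<lambda>\<^sub>1 + \<dots> + \<lambda>\<^sub>r\<close>.\<close>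
  have "A i j * A j i \<noteq> 4"
  proof
    assume "A i j * A j i = 4"
    then have "B v v = 0"
      using four Bv by simp
    then have "v = 0"
      using B_self_eq_0[of v] by (auto simp: fun_eq_iff v_def sroot_apply)
    moreover have "2 * B (fund_sum r R) (\<gamma> i) = P" "2 * B (fund_sum r R) (\<gamma> j) = Q"
      using coord_root_norm[OF i, of "fund_sum r R"] coord_root_norm[OF j, of "fund_sum r R"] i j
      by (simp_all add: fund_sum_apply P_def Q_def)
    then have "2 * B (fund_sum r R) v = Q * P - C * Q"
      unfolding v_def by (simp add: B_diff_right B_smul_right algebra_simps)
    ultimately show False
      using \<open>C \<le> 0\<close> P mult_nonpos_nonneg[of C Q] B_zero_right by (simp add: mult_pos_pos)
  qed
  moreover have "(A i j * A j i) * (P * Q) \<le> 4 * (P * Q)"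
    using four PQC by simp
  then have "A i j * A j i \<le> 4"
    using P by (simp add: mult_le_cancel_right)
  ultimately show ?thesis
    by simp
qed

definition plane :: "nat \<Rightarrow> nat \<Rightarrow> wt \<Rightarrow> int \<Rightarrow> int \<Rightarrow> wt" where
  "plane s t l p q = (\<lambda>k. l k + p * \<gamma> s k + q * \<gamma> t k)"

lemma plane_zero: "plane s t l 0 0 = l"
  by (simp add: plane_def)

lemma sref_plane_fst:
  "s \<in> R \<Longrightarrow> sr s (plane s t l p q) = plane s t l (p - (l s + 2 * p + A s t * q)) q"
  by (auto simp: fun_eq_iff plane_def sref_apply sroot_apply cartan_diag algebra_simps)

lemma sref_plane_snd:
  "t \<in> R \<Longrightarrow> sr t (plane s t l p q) = plane s t l p (q - (l t + A t s * p + 2 * q))"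
  by (auto simp: fun_eq_iff plane_def sref_apply sroot_apply cartan_diag algebra_simps)

lemma sroot_eq_plane: "\<gamma> s = plane s t 0 1 0"
  by (simp add: plane_def fun_eq_iff)

lemma weyl_plane:
  assumes "w \<in> W"
  shows "w (plane s t 0 x y) = smul x (w (\<gamma> s)) + smul y (w (\<gamma> t))"
proof -
  have "plane s t 0 x y = smul x (\<gamma> s) + smul y (\<gamma> t)"
    by (simp add: plane_def fun_eq_iff)
  then show ?thesis
    by (simp only: weyl_add[OF assms] weyl_smul[OF assms])
qed

lemma plane_exI: "0 \<le> p \<Longrightarrow> 0 \<le> q \<Longrightarrow> (\<exists>x\<ge>0. \<exists>y\<ge>0. plane s t l p q = plane s t l x y)"
  by blast

text \<open>The finitely many rank 2 Cartan matrices are checked by direct computation: the braid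
  relation of length \<open>m \<in> {2, 3, 4, 6}\<close>, and positivity of \<open>(\<dots> s\<^sub>t s\<^sub>s s\<^sub>t) \<gamma>\<^sub>s\<close> for the
  alternating words of length \<open>< m\<close> ending in \<open>t\<close>.\<close>
lemma rank2_braid:
  assumes s: "s \<in> R" and t: "t \<in> R" and st: "s \<noteq> t"
  obtains m where "m \<ge> 1" "wm (alt_word s t m) = wm (alt_word t s m)"
    "\<forall>k<m. \<exists>x y. 0 \<le> x \<and> 0 \<le> y \<and> wm (alt_word s t k) (\<gamma> s) = plane s t 0 x y"
proof -
  have "(A s t, A t s) \<in> {(0, 0), (-1, -1), (-1, -2), (-2, -1), (-1, -3), (-3, -1)}"
    using cartan_pair_cases cartan_offdiag_nonpos[OF s t st] cartan_offdiag_nonpos[OF t s] st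
      cartan_product_le_3[OF s t st] cartan_zero_sym[OF s t] by metis
  moreover define m :: nat where
    "m = (if A s t * A t s = 0 then 2 else if A s t * A t s = 1 then 3
          else if A s t * A t s = 2 then 4 else 6)"
  ultimately have cases: "(A s t, A t s, m) \<in> {(0, 0, 2), (-1, -1, 3), (-1, -2, 4), (-2, -1, 4),
      (-1, -3, 6), (-3, -1, 6)}"
    by auto
  have "wm (alt_word s t m) (plane s t l 0 0) = wm (alt_word t s m) (plane s t l 0 0)" for l
    using cases
    by (elim insertE emptyE; simp add: sref_plane_fst[OF s] sref_plane_snd[OF t] algebra_simps;
        (intro arg_cong2[where f = "plane s t l"]; linarith)?)
  then have "wm (alt_word s t m) = wm (alt_word t s m)"
    by (simp add: plane_zero fun_eq_iff)
  moreover have "\<forall>k<m. \<exists>x y. 0 \<le> x \<and> 0 \<le> y \<and> wm (alt_word s t k) (\<gamma> s) = plane s t 0 x y"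
    unfolding sroot_eq_plane[of s t] using cases
    by (elim insertE emptyE; simp add: all_less_numeral sref_plane_fst[OF s] sref_plane_snd[OF t]
        algebra_simps plane_exI)
  moreover have "m \<ge> 1"
    unfolding m_def by simp
  ultimately show ?thesis
    using that by blast
qed

lemma len_comp_parlen:
  assumes "I \<subseteq> R" "v \<in> W" "generated I u"
  shows "len (v \<circ> u) \<le> len v + parlen I u"
proof -
  have "u \<in> W"
    using generated_mono[OF assms(1,3)] generated_R_iff by simp
  then show ?thesis
    using len_comp[OF assms(2)] parlen_mono[OF assms(1,3)] by fastforce
qed

lemma minimal_word_is_alt_word:
  assumes st: "s \<in> R" "t \<in> R" "s \<noteq> t"
    and ws: "set ws \<subseteq> {s, t}" "length ws = parlen {s, t} (wm ws)"
    and le: "parlen {s, t} (wm ws) \<le> parlen {s, t} (wm ws \<circ> sr s)"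
  shows "ws = alt_word s t (length ws)"
proof (rule alternating_eq_alt_word[OF st(3) ws(1)])
  show "\<nexists>xs a ys. ws = xs @ a # a # ys"
  proof
    assume "\<exists>xs a ys. ws = xs @ a # a # ys"
    then obtain xs a ys where ws_eq: "ws = xs @ a # a # ys"
      by auto
    then have "wm ws = wm (xs @ ys)"
      using ws(1) st by (auto simp: word_map_append fun_eq_iff)
    then show False
      using parlen_le_length[of "xs @ ys" "{s, t}"] ws ws_eq by simp
  qed
  show "ws = [] \<or> last ws = t"
  proof (rule ccontr)
    assume "\<not> (ws = [] \<or> last ws = t)"
    moreover have "ws \<noteq> [] \<Longrightarrow> last ws \<in> {s, t}"
      using ws(1) last_in_set by blast
    ultimately have "ws = butlast ws @ [s]"
      using append_butlast_last_id[of ws] by auto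
    then obtain ws' where ws_eq: "ws = ws' @ [s]" ..
    then have "wm ws \<circ> sr s = wm ws'"
      using st by (simp add: word_map_append)
    then show False
      using parlen_le_length[of ws' "{s, t}"] ws ws_eq le by simp
  qed
qed

text \<open>In the dihedral group \<open>\<langle>s\<^sub>s, s\<^sub>t\<rangle>\<close>, an element without right descent \<open>s\<close> is an
  alternating word ending in \<open>t\<close> and shorter than the braid relation, so the rank 2 table applies.\<close>
lemma dihedral_positive:
  assumes s: "s \<in> R" and t: "t \<in> R" and st: "s \<noteq> t"
    and g: "generated {s, t} v" and le: "parlen {s, t} v \<le> parlen {s, t} (v \<circ> sr s)"
  obtains x y where "0 \<le> x" "0 \<le> y" "v (\<gamma> s) = plane s t 0 x y"
proof -
  obtain ws where ws: "set ws \<subseteq> {s, t}" "wm ws = v" "length ws = parlen {s, t} v"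
    using parlen_obtain[OF g] by blast
  define k where "k = length ws"
  have alt: "ws = alt_word s t k"
    using minimal_word_is_alt_word[OF s t st ws(1)] ws le k_def by simp
  obtain m where m: "m \<ge> 1" "wm (alt_word s t m) = wm (alt_word t s m)"
      "\<forall>k<m. \<exists>x y. 0 \<le> x \<and> 0 \<le> y \<and> wm (alt_word s t k) (\<gamma> s) = plane s t 0 x y"
    using rank2_braid[OF s t st] by blast
  have "k < m"
  proof (rule ccontr)
    assume "\<not> k < m"
    then obtain pre where pre: "alt_word s t k = pre @ alt_word s t m"
      using alt_word_suffix[of m k] by auto
    obtain pre' where pre': "alt_word t s m = pre' @ [s]"
      using alt_word_last[OF m(1)] by auto
    have "v = wm (pre @ pre') \<circ> sr s"
      using ws(2) alt pre pre' m(2) by (simp add: word_map_append o_assoc)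
    then have "v \<circ> sr s = wm (pre @ pre')"
      using s by simp
    moreover have "set (pre @ pre') \<subseteq> {s, t}"
      using pre pre' set_alt_word[of s t k] set_alt_word[of t s m] by auto
    moreover have "length (pre @ pre') + 1 = k"
      using arg_cong[OF pre, of length] arg_cong[OF pre', of length] m(1) by simp
    ultimately have "parlen {s, t} (v \<circ> sr s) < k"
      using parlen_le_length[of "pre @ pre'" "{s, t}"] by simp
    then show False
      using le ws(3) k_def by simp
  qed
  then show ?thesis
    using m(3) ws(2) alt that by blast
qed

lemma parabolic_factorization:
  assumes I: "I \<subseteq> R" and w0: "w0 \<in> W" "generated I u0" "w0 \<circ> u0 = w"
    "len w0 + parlen I u0 = len w"
  obtains v u where "v \<in> W" "generated I u" "v \<circ> u = w" "len v + parlen I u = len w"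
    "len v \<le> len w0" "\<And>x. x \<in> I \<Longrightarrow> len v \<le> len (v \<circ> sr x)"
proof -
  define P where "P v \<longleftrightarrow> v \<in> W \<and> (\<exists>u. generated I u \<and> v \<circ> u = w \<and> len v + parlen I u = len w)"
    for v
  have "P w0"
    unfolding P_def using w0 by blast
  then obtain v where Pv: "P v" and v_min: "\<And>v'. P v' \<Longrightarrow> len v \<le> len v'"
    using ex_has_least_nat[of P w0 len] by blast
  then obtain u where v: "v \<in> W" "generated I u" "v \<circ> u = w" "len v + parlen I u = len w"
    unfolding P_def by blast
  have "len v \<le> len (v \<circ> sr x)" if x: "x \<in> I" for x
  proof (rule ccontr)
    assume less: "\<not> len v \<le> len (v \<circ> sr x)"
    have x_R: "x \<in> R"
      using x I by auto
    have g: "generated I (sr x \<circ> u)"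
      using generated_comp[OF generated_sref[OF x] v(2)] .
    have v': "v \<circ> sr x \<in> W"
      using weyl_comp[OF v(1) sref_in_weyl[OF x_R]] .
    have eq: "(v \<circ> sr x) \<circ> (sr x \<circ> u) = w"
      using v(3) x_R by (simp add: o_assoc[symmetric])
    have "parlen I (sr x \<circ> u) \<le> parlen I u + 1"
      using parlen_comp[OF generated_sref[OF x] v(2)] parlen_sref[OF x] by simp
    moreover have "len w \<le> len (v \<circ> sr x) + parlen I (sr x \<circ> u)"
      using len_comp_parlen[OF I v' g] eq by simp
    ultimately have "P (v \<circ> sr x)"
      unfolding P_def using eq v' g v(4) less by (intro conjI exI[of _ "sr x \<circ> u"]) simp_all
    then show False
      using v_min less by fastforce
  qed
  moreover have "len v \<le> len w0"
    using v_min[OF \<open>P w0\<close>] .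
  ultimately show ?thesis
    using that v by blast
qed

text \<open>Induction on \<open>\<ell>(w)\<close>: if \<open>w = w' s\<^sub>t\<close> is reduced, factor \<open>w = v u\<close> with \<open>u\<close> in the dihedral
  subgroup \<open>\<langle>s\<^sub>s, s\<^sub>t\<rangle>\<close> and \<open>v\<close> without right descents in \<open>{s, t}\<close>; then \<open>v \<gamma>\<^sub>s, v \<gamma>\<^sub>t \<ge> 0\<close> by
  induction and \<open>u \<gamma>\<^sub>s\<close> is a nonnegative combination of \<open>\<gamma>\<^sub>s, \<gamma>\<^sub>t\<close>.\<close>
theorem positive_root_image:
  "w \<in> W \<Longrightarrow> s \<in> R \<Longrightarrow> len w \<le> len (w \<circ> sr s) \<Longrightarrow> Qplus (w (\<gamma> s))"
proof (induction "len w" arbitrary: w s rule: less_induct)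
  case less
  note w = less.prems(1) and s = less.prems(2) and le = less.prems(3)
  show ?case
  proof (cases "len w = 0")
    case True
    then show ?thesis
      using len_eq_0[OF w] Qplus_sroot[OF s] by simp
  next
    case False
    then obtain t w1 where t: "t \<in> R" "w1 \<in> W" "w = w1 \<circ> sr t" "len w1 + 1 = len w"
      using len_split_last[OF w] by blast
    have st: "s \<noteq> t"
      using le t by auto
    define I where "I = {s, t}"
    have I: "I \<subseteq> R" "s \<in> I" "t \<in> I"
      using s t I_def by auto
    have "len w1 + parlen I (sr t) = len w"
      using parlen_sref_eq_1[OF I(3) t(1)] t(4) by simp
    then obtain v u where v: "v \<in> W" "generated I u" "v \<circ> u = w" "len v + parlen I u = len w"
        "len v \<le> len w1" "\<And>x. x \<in> I \<Longrightarrow> len v \<le> len (v \<circ> sr x)"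
      using parabolic_factorization[OF I(1) t(2) generated_sref[OF I(3)] t(3)[symmetric]] by blast
    have "len v < len w"
      using v(5) t(4) by simp
    then have Q: "Qplus (v (\<gamma> s))" "Qplus (v (\<gamma> t))"
      using less.hyps[OF _ v(1) s v(6)[OF I(2)]] less.hyps[OF _ v(1) t(1) v(6)[OF I(3)]] by blast+
    have "parlen I u \<le> parlen I (u \<circ> sr s)"
    proof (rule ccontr)
      assume "\<not> ?thesis"
      moreover have "w \<circ> sr s = v \<circ> (u \<circ> sr s)"
        using v(3) by (simp add: o_assoc)
      ultimately show False
        using len_comp_parlen[OF I(1) v(1) generated_comp[OF v(2) generated_sref[OF I(2)]]] v(4) le
        by simp
    qed
    then obtain x y where xy: "0 \<le> x" "0 \<le> y" "u (\<gamma> s) = plane s t 0 x y"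
      using dihedral_positive[OF s t(1) st] v(2) I_def by blast
    have "w (\<gamma> s) = v (plane s t 0 x y)"
      using v(3) xy(3) by auto
    also have "\<dots> = smul x (v (\<gamma> s)) + smul y (v (\<gamma> t))"
      by (rule weyl_plane[OF v(1)])
    finally show ?thesis
      using Q xy Qplus_add Qplus_smul by simp
  qed
qed

lemma negative_root_image:
  assumes "w \<in> W" "s \<in> R" "len (w \<circ> sr s) < len w"
  shows "Qplus (- w (\<gamma> s))"
proof -
  have "Qplus ((w \<circ> sr s) (\<gamma> s))"
    using positive_root_image[OF weyl_comp[OF assms(1) sref_in_weyl[OF assms(2)]] assms(2)] assms
    by simp
  then show ?thesis
    using sref_sroot[OF assms(2)] weyl_neg[OF assms(1)] by simp
qed

lemma positive_root_image_inv:
  assumes w: "w \<in> W" and i: "i \<in> R" and le: "len w \<le> len (sr i \<circ> w)"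
  shows "Qplus (inv w (\<gamma> i))"
proof -
  have "inv (sr i \<circ> w) = inv w \<circ> sr i"
    using weyl_inv_comp[OF sref_in_weyl[OF i] w] inv_sref[OF i] by simp
  then have "len (inv w) \<le> len (inv w \<circ> sr i)"
    using le len_inv[OF w] len_inv[of "sr i \<circ> w"] weyl_comp[OF sref_in_weyl[OF i] w] by simp
  then show ?thesis
    using positive_root_image[OF weyl_inv_in[OF w] i] by blast
qed

lemma descents_iff: "i \<in> descents A r w \<longleftrightarrow> i \<in> R \<and> len (w \<circ> sr i) < len w"
  unfolding descents_def wlen_eq_len by auto

section \<open>Dominant weights\<close>

lemma dominant_minus_orbit:
  assumes d: "dominant r d"
  shows "v \<in> W \<Longrightarrow> Qplus (d - v d)"
proof (induction "len v" arbitrary: v rule: less_induct)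
  case less
  show ?case
  proof (cases "len v = 0")
    case True
    then show ?thesis
      using len_eq_0[OF less.prems] Qplus_zero by simp
  next
    case False
    then obtain i v' where iv: "i \<in> R" "v' \<in> W" "v = sr i \<circ> v'" "len v' + 1 = len v"
      using len_split_first[OF less.prems] by blast
    have "v' d i * root_norm i = 2 * B d (inv v' (\<gamma> i))"
      using coord_root_norm[OF iv(1)] B_weyl_invariant[OF weyl_inv_in[OF iv(2)], of "v' d"] iv(2)
      by simp
    moreover have "Qplus (inv v' (\<gamma> i))"
      using positive_root_image_inv[OF iv(2,1)] iv by simp
    ultimately have "v' d i * root_norm i \<ge> 0"
      using B_dominant_Qplus_nonneg[OF d] by simp
    then have "v' d i \<ge> 0"
      using root_norm_pos[OF iv(1)] by (simp add: zero_le_mult_iff)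
    then have "Qplus ((d - v' d) + smul (v' d i) (\<gamma> i))"
      using Qplus_add_smul less.hyps[of v'] iv Qplus_sroot by simp
    moreover have "d - v d = (d - v' d) + smul (v' d i) (\<gamma> i)"
      using iv(3) by (simp add: sref_apply fun_eq_iff)
    ultimately show ?thesis
      by (simp only:)
  qed
qed

lemma dominant_orbit_unique:
  assumes "dominant r d1" "dominant r d2" "v \<in> W" "v d1 = d2"
  shows "d1 = d2"
proof -
  have "Qplus (d1 - d2)"
    using dominant_minus_orbit[OF assms(1,3)] assms(4) by simp
  moreover have "Qplus (- (d1 - d2))"
    using dominant_minus_orbit[OF assms(2) weyl_inv_in[OF assms(3)]] assms(3,4) by auto
  ultimately have "d1 - d2 = 0"
    by (rule Qplus_antisym)
  then show ?thesis
    by simp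
qed

text \<open>An element of the orbit maximising \<open>u \<mapsto> B(u x, \<lambda>\<^sub>1 + \<dots> + \<lambda>\<^sub>r)\<close> is dominant: a negative
  coordinate \<open>(u x)\<^sub>j\<close> would be increased by \<open>s\<^sub>j\<close>.\<close>
lemma dominant_in_orbit:
  assumes x: "in_lattice r x"
  obtains u where "u \<in> W" "dominant r (u x)"
proof -
  define f where "f u = B (u x) (fund_sum r R)" for u
  have "Max (f ` W) \<in> f ` W"
    using finite_W weyl.weyl_id by (intro Max_in) auto
  then obtain u0 where u0: "Max (f ` W) = f u0" "u0 \<in> W"
    by (rule imageE)
  then have u0_max: "f u \<le> f u0" if "u \<in> W" for u
    using finite_W that by (metis Max_ge finite_imageI image_eqI)
  have "0 \<le> u0 x j" if j: "j \<in> R" for j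
  proof (rule ccontr)
    assume neg: "\<not> 0 \<le> u0 x j"
    have "2 * B (fund_sum r R) (\<gamma> j) = root_norm j"
      using coord_root_norm[OF j, of "fund_sum r R"] j by (simp add: fund_sum_apply)
    then have "u0 x j * B (\<gamma> j) (fund_sum r R) < 0"
      using root_norm_pos[OF j] neg B_sym[of "\<gamma> j"] by (simp add: mult_neg_pos)
    moreover have "f (sr j \<circ> u0) = f u0 - u0 x j * B (\<gamma> j) (fund_sum r R)"
      unfolding f_def by (simp add: sref_eq B_diff_left B_smul_left)
    ultimately show False
      using u0_max[OF weyl_comp[OF sref_in_weyl[OF j] u0(2)]] by simp
  qed
  then have "dominant r (u0 x)"
    unfolding dominant_def using weyl_lattice[OF u0(2) x] by blast
  then show ?thesis
    using that u0(2) by blast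
qed

lemma dom_rep_in_orbit:
  assumes "in_lattice r x"
  shows "dominant r (dom_rep A r x) \<and> (\<exists>u\<in>W. u x = dom_rep A r x)"
proof -
  obtain u where u: "u \<in> W" "dominant r (u x)"
    using dominant_in_orbit[OF assms] by blast
  have "\<exists>!d. dominant r d \<and> (\<exists>w\<in>W. w x = d)"
  proof (rule ex1I[of _ "u x"])
    show "dominant r (u x) \<and> (\<exists>w\<in>W. w x = u x)"
      using u by blast
    fix d
    assume "dominant r d \<and> (\<exists>w\<in>W. w x = d)"
    then obtain w where "w \<in> W" "w x = d" "dominant r d"
      by blast
    then show "d = u x"
      using dominant_orbit_unique[OF u(2), of d "w \<circ> inv u"] u(1) weyl_comp weyl_inv_in by auto
  qed
  then show ?thesis
    unfolding dom_rep_def by (rule theI')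
qed

section \<open>Demazure operators\<close>

lemma lookup_sact: "i \<in> R \<Longrightarrow> Poly_Mapping.lookup (sact A r i f) v = Poly_Mapping.lookup f (sr i v)"
proof -
  assume i: "i \<in> R"
  have "{v. Poly_Mapping.lookup f (sr i v) \<noteq> 0} \<subseteq> sr i ` Poly_Mapping.keys f"
    using i by (force simp: in_keys_iff intro: image_eqI[of _ "sr i"])
  then have "finite {v. Poly_Mapping.lookup f (sr i v) \<noteq> 0}"
    by (rule finite_subset) auto
  then show ?thesis
    unfolding sact_def by simp
qed

lemma sact_diff: "i \<in> R \<Longrightarrow> sact A r i (f - g) = sact A r i f - sact A r i g"
  by (rule poly_mapping_eqI) (simp add: lookup_sact lookup_minus)

lemma sact_frag_of: "i \<in> R \<Longrightarrow> sact A r i (frag_of v) = frag_of (sr i v)"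
  by (rule poly_mapping_eqI) (auto simp: lookup_sact)

lemma demazure_eqI:
  assumes i: "i \<in> R" and G: "(1 - frag_of (- \<gamma> i)) * G = f - frag_of (- \<gamma> i) * sact A r i f"
  shows "demazure A r i f = G"
  unfolding demazure_def
proof (rule the_equality)
  fix g
  assume "(1 - frag_of (- \<gamma> i)) * g = f - frag_of (- \<gamma> i) * sact A r i f"
  then have "(1 - frag_of (- \<gamma> i)) * (g - G) = 0"
    using G by (simp add: right_diff_distrib)
  moreover have "(- \<gamma> i) i < 0"
    using sroot_self[OF i] by simp
  ultimately have "g - G = 0"
    using one_minus_frag_of_times_eq_0 by blast
  then show "g = G"
    by simp
qed (rule G)

text \<open>The Demazure image of \<open>e\<^sup>v\<close>, with \<open>m = \<langle>v, \<gamma>\<^sub>i\<^sup>\<or>\<rangle>\<close>: the sum of \<open>e\<^bsup>v - k \<gamma>\<^sub>i\<^esup>\<close> over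
  \<open>0 \<le> k \<le> m\<close> if \<open>m \<ge> 0\<close>, and minus the sum over \<open>m < k < 0\<close> otherwise.\<close>
definition demazure_mono :: "nat \<Rightarrow> wt \<Rightarrow> (wt \<Rightarrow>\<^sub>0 int)" where
  "demazure_mono i v =
    (if v i \<ge> 0 then (\<Sum>k<Suc (nat (v i)). frag_of (v - smul (int k) (\<gamma> i)))
     else - (\<Sum>k<nat (- v i) - 1. frag_of (v + smul (int (Suc k)) (\<gamma> i))))"

lemma demazure_mono_eq:
  assumes i: "i \<in> R"
  shows "(1 - frag_of (- \<gamma> i)) * demazure_mono i v = frag_of v - frag_of (- \<gamma> i) * frag_of (sr i v)"
proof (cases "v i \<ge> 0")
  case True
  define n where "n = Suc (nat (v i))"
  define F where "F k = frag_of (v - smul (int k) (\<gamma> i))" for k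
  have shift: "frag_of (- \<gamma> i) * F k = F (Suc k)" for k
    unfolding F_def by (simp add: mult_single frag_of_eq fun_eq_iff algebra_simps)
  have Fn: "F n = frag_of (- \<gamma> i) * frag_of (sr i v)"
    unfolding F_def n_def using True
      by (simp add: mult_single frag_of_eq sref_eq fun_eq_iff algebra_simps)
  have "(1 - frag_of (- \<gamma> i)) * demazure_mono i v = (\<Sum>k<n. F k) - frag_of (- \<gamma> i) * (\<Sum>k<n. F k)"
    using True unfolding demazure_mono_def F_def n_def by (simp add: left_diff_distrib)
  also have "\<dots> = (\<Sum>k<n. F k - F (Suc k))"
    by (simp only: sum_distrib_left shift sum_subtractf)
  also have "\<dots> = F 0 - F n"
    by (rule sum_lessThan_telescope')
  finally show ?thesis
    unfolding Fn by (simp add: F_def)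
next
  case False
  define n where "n = nat (- v i) - 1"
  define H where "H k = frag_of (v + smul (int k) (\<gamma> i))" for k
  have shift: "frag_of (- \<gamma> i) * H (Suc k) = H k" for k
    unfolding H_def by (simp add: mult_single frag_of_eq fun_eq_iff algebra_simps)
  have Hn: "H n = frag_of (- \<gamma> i) * frag_of (sr i v)"
    unfolding H_def n_def using False
    by (simp add: mult_single frag_of_eq sref_eq fun_eq_iff algebra_simps of_nat_diff)
  have "(1 - frag_of (- \<gamma> i)) * demazure_mono i v
      = frag_of (- \<gamma> i) * (\<Sum>k<n. H (Suc k)) - (\<Sum>k<n. H (Suc k))"
    using False unfolding demazure_mono_def H_def n_def by (simp add: left_diff_distrib)
  also have "\<dots> = (\<Sum>k<n. H k - H (Suc k))"
    by (simp only: sum_distrib_left shift sum_subtractf)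
  also have "\<dots> = H 0 - H n"
    by (rule sum_lessThan_telescope')
  finally show ?thesis
    unfolding Hn by (simp add: H_def)
qed

lemma demazure_eq_frag_extend: "i \<in> R \<Longrightarrow> demazure A r i f = frag_extend (demazure_mono i) f"
proof (rule demazure_eqI)
  assume i: "i \<in> R"
  show "(1 - frag_of (- \<gamma> i)) * frag_extend (demazure_mono i) f
      = f - frag_of (- \<gamma> i) * sact A r i f"
  proof (induction f rule: frag_induction[OF subset_UNIV])
    case 1
    show ?case
      using sact_diff[OF i, of 0 0] by simp
  next
    case (2 x)
    show ?case
      by (simp only: frag_extend_of demazure_mono_eq[OF i] sact_frag_of[OF i])
  next
    case (3 a b)
    then show ?case
      by (simp add: frag_extend_diff sact_diff[OF i] right_diff_distrib)
  qed
qed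

lemma demazure_bar_eq_frag_extend:
  "i \<in> R \<Longrightarrow> demazure_bar A r i f = frag_extend (\<lambda>v. demazure_mono i v - frag_of v) f"
  unfolding demazure_bar_def frag_extend_diff_fun
  by (simp add: demazure_eq_frag_extend flip: frag_expansion)

definition root_string :: "nat \<Rightarrow> wt \<Rightarrow> wt set" where
  "root_string i x = {x - smul k (\<gamma> i) | k. (0 \<le> k \<and> k \<le> x i) \<or> (x i \<le> k \<and> k \<le> 0)}"

lemma keys_demazure_bar_mono:
  "Poly_Mapping.keys (demazure_mono i v - frag_of v) \<subseteq> root_string i v"
proof -
  have on_string: "v - smul k (\<gamma> i) \<in> root_string i v"
    if "(0 \<le> k \<and> k \<le> v i) \<or> (v i \<le> k \<and> k \<le> 0)" for k
    unfolding root_string_def using that by blast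
  have "Poly_Mapping.keys (demazure_mono i v) \<subseteq> root_string i v"
  proof (cases "v i \<ge> 0")
    case True
    have "Poly_Mapping.keys (demazure_mono i v)
        \<subseteq> (\<Union>k<Suc (nat (v i)). Poly_Mapping.keys (frag_of (v - smul (int k) (\<gamma> i))))"
      unfolding demazure_mono_def by (subst if_P[OF True]) (rule keys_sum)
    also have "\<dots> \<subseteq> root_string i v"
      using True by (auto simp: keys_frag_of intro!: on_string)
    finally show ?thesis .
  next
    case False
    have "Poly_Mapping.keys (demazure_mono i v)
        \<subseteq> (\<Union>k<nat (- v i) - 1. Poly_Mapping.keys (frag_of (v + smul (int (Suc k)) (\<gamma> i))))"
      unfolding demazure_mono_def by (subst if_not_P[OF False]) (simp only: keys_minus keys_sum)
    also have "\<dots> \<subseteq> root_string i v"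
    proof
      fix x
      assume "x \<in> (\<Union>k<nat (- v i) - 1. Poly_Mapping.keys (frag_of (v + smul (int (Suc k)) (\<gamma> i))))"
      then obtain k where k: "k < nat (- v i) - 1" "x = v + smul (int (Suc k)) (\<gamma> i)"
        by (auto simp: keys_frag_of)
      then have "x = v - smul (- int (Suc k)) (\<gamma> i)"
        by (simp add: fun_eq_iff algebra_simps)
      moreover have "v - smul (- int (Suc k)) (\<gamma> i) \<in> root_string i v"
        using False k(1) by (intro on_string) auto
      ultimately show "x \<in> root_string i v"
        by (simp only:)
    qed
    finally show ?thesis .
  qed
  moreover have "v \<in> root_string i v"
    using on_string[of 0] by force
  ultimately show ?thesis
    using keys_diff[of "demazure_mono i v" "frag_of v"] by (auto simp: keys_frag_of)
qed

lemma demazure_bar_mono_pos: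
  assumes i: "i \<in> R" and pos: "v i > 0"
  shows "demazure_mono i v - frag_of v
    = frag_of (sr i v) + (\<Sum>k<nat (v i) - 1. frag_of (v - smul (int (Suc k)) (\<gamma> i)))"
proof -
  define F where "F k = frag_of (v - smul (int k) (\<gamma> i))" for k
  obtain m where m: "nat (v i) = Suc m"
    using pos by (metis gr0_implies_Suc zero_less_nat_eq)
  have "demazure_mono i v = (\<Sum>k<Suc (Suc m). F k)"
    unfolding demazure_mono_def F_def using pos m by simp
  also have "\<dots> = F 0 + (\<Sum>k<Suc m. F (Suc k))"
    by (rule sum.lessThan_Suc_shift)
  also have "\<dots> = F 0 + (\<Sum>k<m. F (Suc k)) + F (Suc m)"
    by simp
  finally have "demazure_mono i v = F 0 + (\<Sum>k<m. F (Suc k)) + F (Suc m)" .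
  moreover have "F 0 = frag_of v" "F (Suc m) = frag_of (sr i v)"
    unfolding F_def using m pos by (simp_all add: sref_eq flip: m)
  ultimately show ?thesis
    using m unfolding F_def by (simp add: algebra_simps)
qed

section \<open>Leading terms and descent monomials\<close>

text \<open>Stronger than \<open>[x]\<^sub>+ \<le> d\<close>, but visibly preserved along root strings.\<close>
definition orbit_below :: "wt \<Rightarrow> wt \<Rightarrow> bool" where
  "orbit_below d x \<longleftrightarrow> (\<forall>u\<in>W. Qplus (d - u x))"

text \<open>Every element of the \<open>i\<close>-string through \<open>x\<close> is a convex combination of \<open>x\<close> and
  \<open>s\<^sub>i x\<close> along \<open>\<gamma>\<^sub>i\<close>; since \<open>u \<gamma>\<^sub>i\<close> is either positive or negative, \<open>u y\<close> lies below \<open>u x\<close>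
  or below \<open>u (s\<^sub>i x)\<close>.\<close>
lemma orbit_below_string:
  assumes i: "i \<in> R" and y: "y \<in> root_string i x" and below: "orbit_below d x"
  shows "orbit_below d y"
  unfolding orbit_below_def
proof
  fix u
  assume u: "u \<in> W"
  obtain k where k: "y = x - smul k (\<gamma> i)" "(0 \<le> k \<and> k \<le> x i) \<or> (x i \<le> k \<and> k \<le> 0)"
    using y unfolding root_string_def by blast
  have Q1: "Qplus (d - u x)" and Q2: "Qplus (d - u (sr i x))"
    using below u weyl_comp[OF u sref_in_weyl[OF i]] unfolding orbit_below_def by auto
  have "y = sr i x + smul (x i - k) (\<gamma> i)"
    unfolding k(1) sref_eq smul_diff_left by (simp add: algebra_simps)
  then have "u y = u (sr i x) + smul (x i - k) (u (\<gamma> i))"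
    by (simp only: weyl_add[OF u] weyl_smul[OF u])
  moreover have "u y = u x - smul k (u (\<gamma> i))"
    unfolding k(1) by (simp only: weyl_diff[OF u] weyl_smul[OF u])
  ultimately have e1: "d - u y = (d - u x) + smul k (u (\<gamma> i))"
    and e2: "d - u y = (d - u (sr i x)) + smul (k - x i) (u (\<gamma> i))"
    by (simp_all add: smul_diff_left algebra_simps)
  show "Qplus (d - u y)"
  proof (cases "len u \<le> len (u \<circ> sr i)")
    case True
    then have pos: "Qplus (u (\<gamma> i))"
      using positive_root_image u i by blast
    show ?thesis
    proof (cases "0 \<le> k")
      case True
      then show ?thesis
        unfolding e1 by (rule Qplus_add_smul[OF Q1 pos])
    next
      case False
      then show ?thesis
        unfolding e2 using k(2) by (intro Qplus_add_smul[OF Q2 pos]) simp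
    qed
  next
    case False
    then have neg: "Qplus (- u (\<gamma> i))"
      using negative_root_image u i by simp
    show ?thesis
    proof (cases "k \<le> 0")
      case True
      then show ?thesis
        unfolding e1 smul_minus_minus[of k, symmetric] by (intro Qplus_add_smul[OF Q1 neg]) simp
    next
      case False
      then show ?thesis
        unfolding e2 smul_minus_minus[of "k - x i", symmetric] minus_diff_eq
        using k(2) by (intro Qplus_add_smul[OF Q2 neg]) simp
    qed
  qed
qed

lemma B_string:
  assumes "i \<in> R"
  shows "B (x - smul k (\<gamma> i)) (x - smul k (\<gamma> i)) = B x x - k * (x i - k) * root_norm i"
proof -
  have "B (x - smul k (\<gamma> i)) (x - smul k (\<gamma> i)) = B x x - k * (2 * B x (\<gamma> i)) + k * k * root_norm i"
    by (simp add: B_diff_left B_diff_right B_smul_left B_smul_right B_sym root_norm_def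
        algebra_simps)
  then show ?thesis
    unfolding coord_root_norm[OF assms, symmetric] by (simp add: algebra_simps)
qed

lemma B_string_le:
  assumes i: "i \<in> R" and y: "y \<in> root_string i x"
  shows "B y y \<le> B x x"
proof -
  obtain k where k: "y = x - smul k (\<gamma> i)" "(0 \<le> k \<and> k \<le> x i) \<or> (x i \<le> k \<and> k \<le> 0)"
    using y unfolding root_string_def by blast
  then have "0 \<le> k * (x i - k)"
    by (auto intro: mult_nonneg_nonneg mult_nonpos_nonpos)
  then show ?thesis
    using B_string[OF i, of x k] k(1) root_norm_pos[OF i] by simp
qed

lemma B_string_less:
  assumes "i \<in> R" "0 < k" "k < x i"
  shows "B (x - smul k (\<gamma> i)) (x - smul k (\<gamma> i)) < B x x"
  using B_string[OF assms(1), of x k] assms root_norm_pos[OF assms(1)] by simp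

lemma root_string_lattice:
  assumes "y \<in> root_string i x" "in_lattice r x"
  shows "in_lattice r y"
proof -
  obtain k where "y = x - smul k (\<gamma> i)"
    using assms(1) unfolding root_string_def by blast
  then show ?thesis
    using assms(2) unfolding in_lattice_def by (simp add: sroot_apply)
qed

lemma Qplus_weyl_root_comb:
  assumes u: "u \<in> W" and no_desc: "\<And>k. k \<in> R \<Longrightarrow> n k \<noteq> 0 \<Longrightarrow> len u \<le> len (u \<circ> sr k)"
  shows "Qplus (u (root_comb n))"
proof -
  have terms: "Qplus (smul (int (n j)) (u (\<gamma> j)))" if j: "j \<in> R" for j
  proof (cases "n j = 0")
    case False
    then show ?thesis
      using Qplus_smul positive_root_image[OF u j no_desc[OF j False]] by simp
  qed (simp add: Qplus_zero)
  show ?thesis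
    unfolding weyl_root_comb[OF u] by (rule Qplus_sum[OF finite_atLeastAtMost terms])
qed

lemma Qplus_weyl_root_comb_orthogonal:
  assumes u: "u \<in> W" and D: "descents A r u \<subseteq> J" and orth: "B (fund_sum r J) (root_comb n) = 0"
  shows "Qplus (u (root_comb n))"
proof (rule Qplus_weyl_root_comb[OF u])
  fix k
  assume k: "k \<in> R" "n k \<noteq> 0"
  have "k \<notin> J"
  proof
    assume "k \<in> J"
    then have "n k = 0"
      using B_dominant_root_comb_eq_0[OF fund_sum_dominant orth k(1)] k(1)
        by (simp add: fund_sum_apply)
    with k(2) show False ..
  qed
  then show "len u \<le> len (u \<circ> sr k)"
    using D k(1) descents_iff[of k u] by auto
qed

text \<open>If the coordinate were \<open>\<le> 0\<close>, then \<open>w'\<^sup>-\<^sup>1 \<gamma>\<^sub>i = \<Sum> n\<^sub>k \<gamma>\<^sub>k \<ge> 0\<close> would be orthogonal to \<open>\<lambda>\<^sub>J\<close>, hence supported outside \<open>J\<close>, so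
  \<open>-\<gamma>\<^sub>i = w (\<Sum> n\<^sub>k \<gamma>\<^sub>k)\<close> would be positive as \<open>w\<close> has no descents outside \<open>J\<close>.\<close>
lemma fund_sum_coord_pos:
  assumes w': "w' \<in> W" and i: "i \<in> R" and w: "w = sr i \<circ> w'"
    and lw: "len w' < len w" and D: "descents A r w \<subseteq> J"
  shows "w' (fund_sum r J) i > 0"
proof (rule ccontr)
  assume nonpos: "\<not> w' (fund_sum r J) i > 0"
  define lam where "lam = fund_sum r J"
  have wW: "w \<in> W"
    unfolding w by (rule weyl_comp[OF sref_in_weyl[OF i] w'])
  have "Qplus (inv w' (\<gamma> i))"
    using positive_root_image_inv[OF w' i] lw w by simp
  then obtain n where n: "inv w' (\<gamma> i) = root_comb n"
    unfolding Qplus_def by auto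
  have "w' lam i * root_norm i = 2 * B lam (root_comb n)"
    using coord_root_norm[OF i, of "w' lam"] w' n
      B_weyl_invariant[OF weyl_inv_in[OF w'], of "w' lam" "\<gamma> i"]
    by simp
  moreover have "B lam (root_comb n) \<ge> 0"
    using B_dominant_Qplus_nonneg[OF fund_sum_dominant] Qplus_def lam_def by blast
  moreover have "w' lam i * root_norm i \<le> 0"
    using nonpos root_norm_pos[OF i] lam_def by (simp add: mult_nonpos_nonneg)
  ultimately have "B lam (root_comb n) = 0"
    by simp
  then have "Qplus (w (root_comb n))"
    using Qplus_weyl_root_comb_orthogonal[OF wW D] lam_def by simp
  moreover have "w (root_comb n) = - \<gamma> i"
    using n[symmetric] w w' sref_sroot[OF i] by simp
  ultimately have "\<gamma> i = 0"
    using Qplus_antisym[OF Qplus_sroot[OF i]] by simp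
  then show False
    using sroot_nonzero[OF i] by simp
qed

text \<open>The strict inequality for \<open>B\<close> is what excludes \<open>[v]\<^sub>+ = \<lambda>\<close> for the lower terms.\<close>
definition lower_terms :: "wt \<Rightarrow> (wt \<Rightarrow>\<^sub>0 int) \<Rightarrow> bool" where
  "lower_terms lam c \<longleftrightarrow>
    (\<forall>v\<in>Poly_Mapping.keys c. in_lattice r v \<and> orbit_below lam v \<and> B v v < B lam lam)"

lemma lower_terms_demazure_bar:
  assumes i: "i \<in> R" and c: "lower_terms lam c"
  shows "lower_terms lam (demazure_bar A r i c)"
  unfolding lower_terms_def
proof
  fix v
  assume "v \<in> Poly_Mapping.keys (demazure_bar A r i c)"
  then have "v \<in> (\<Union>x\<in>Poly_Mapping.keys c. Poly_Mapping.keys (demazure_mono i x - frag_of x))"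
    unfolding demazure_bar_eq_frag_extend[OF i] by (rule subsetD[OF keys_frag_extend])
  then obtain x where x: "x \<in> Poly_Mapping.keys c" "v \<in> root_string i x"
    using subsetD[OF keys_demazure_bar_mono] by blast
  have "in_lattice r x" "orbit_below lam x" "B x x < B lam lam"
    using c x(1) unfolding lower_terms_def by auto
  then show "in_lattice r v \<and> orbit_below lam v \<and> B v v < B lam lam"
    using root_string_lattice[OF x(2)] orbit_below_string[OF i x(2)] B_string_le[OF i x(2)] by simp
qed

lemma dominant_orbit:
  assumes "dominant r d" "v \<in> W"
  shows "in_lattice r (v d)" "orbit_below d (v d)" "B (v d) (v d) = B d d"
proof -
  show "in_lattice r (v d)"
    using weyl_lattice[OF assms(2)] assms(1) unfolding dominant_def by blast
  show "B (v d) (v d) = B d d"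
    using B_weyl_invariant[OF assms(2)] .
  have "Qplus (d - u (v d))" if "u \<in> W" for u
    using dominant_minus_orbit[OF assms(1) weyl_comp[OF that assms(2)]] by simp
  then show "orbit_below d (v d)"
    unfolding orbit_below_def by blast
qed

text \<open>For \<open>m = \<langle>\<mu>, \<gamma>\<^sub>i\<^sup>\<or>\<rangle> > 0\<close>, \<open>\<pi>\<^sub>i e\<^sup>\<mu>\<close> is \<open>e\<^bsup>s\<^sub>i \<mu>\<^esup>\<close> plus the monomials
  \<open>e\<^bsup>\<mu> - k \<gamma>\<^sub>i\<^esup>\<close>, \<open>0 < k < m\<close>, which are strictly shorter than \<open>\<mu>\<close> for \<open>B\<close>.\<close>
lemma lower_terms_demazure_bar_step:
  assumes i: "i \<in> R" and mu: "mu i > 0" "in_lattice r mu" "orbit_below lam mu" "B mu mu = B lam lam"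
    and c: "lower_terms lam c"
  obtains c' where "demazure_bar A r i (frag_of mu + c) = frag_of (sr i mu) + c'"
    "lower_terms lam c'"
proof -
  define string where "string = (\<Sum>k<nat (mu i) - 1. frag_of (mu - smul (int (Suc k)) (\<gamma> i)))"
  have "demazure_bar A r i (frag_of mu + c) = frag_of (sr i mu) + string + demazure_bar A r i c"
    unfolding demazure_bar_eq_frag_extend[OF i] frag_extend_add frag_extend_of
      demazure_bar_mono_pos[of i mu, OF i mu(1)] string_def ..
  moreover have "lower_terms lam string"
    unfolding lower_terms_def
  proof
    fix v
    assume "v \<in> Poly_Mapping.keys string"
    then have "v \<in> (\<Union>k<nat (mu i) - 1. Poly_Mapping.keys (frag_of (mu - smul (int (Suc k)) (\<gamma> i))))"
      unfolding string_def by (rule subsetD[OF keys_sum])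
    then obtain k where k: "k < nat (mu i) - 1" "v = mu - smul (int (Suc k)) (\<gamma> i)"
      by (auto simp: keys_frag_of)
    have k_bounds: "0 < int (Suc k)" "int (Suc k) < mu i"
      using k(1) by linarith+
    then have v: "v \<in> root_string i mu"
      unfolding root_string_def k(2) by (intro CollectI exI[of _ "int (Suc k)"]) simp
    have "B v v < B mu mu"
      unfolding k(2) using B_string_less[of i "int (Suc k)" mu, OF i k_bounds] .
    then show "in_lattice r v \<and> orbit_below lam v \<and> B v v < B lam lam"
      using root_string_lattice[OF v mu(2)] orbit_below_string[OF i v mu(3)] mu(4) by simp
  qed
  then have "lower_terms lam (string + demazure_bar A r i c)"
    using lower_terms_demazure_bar[OF i c] keys_add[of string "demazure_bar A r i c"]
    unfolding lower_terms_def by blast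
  ultimately show ?thesis
    using that[of "string + demazure_bar A r i c"] by (simp add: add.assoc)
qed

lemma descents_reduced_left:
  assumes i: "i \<in> R" and w': "w' \<in> W" and len: "len w' + 1 = len (sr i \<circ> w')"
  shows "descents A r w' \<subseteq> descents A r (sr i \<circ> w')"
proof
  fix j
  assume "j \<in> descents A r w'"
  then have j: "j \<in> R" "len (w' \<circ> sr j) < len w'"
    using descents_iff by auto
  have "len (sr i \<circ> w' \<circ> sr j) \<le> len (w' \<circ> sr j) + 1"
    using len_sref_left[OF i weyl_comp[OF w' sref_in_weyl[OF j(1)]]] by (simp add: o_assoc)
  then show "j \<in> descents A r (sr i \<circ> w')"
    using descents_iff j len by auto
qed

lemma demazure_bar_word_leading_term:
  "reduced_word A r w ws \<Longrightarrow> descents A r w \<subseteq> J \<Longrightarrow>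
    \<exists>c. foldr (\<lambda>i g. demazure_bar A r i \<circ> g) ws id (frag_of (fund_sum r J))
          = frag_of (w (fund_sum r J)) + c \<and> lower_terms (fund_sum r J) c"
proof (induction ws arbitrary: w)
  case Nil
  then have "w = id"
    using reduced_wordD[OF Nil.prems(1)] by simp
  then show ?case
    by (intro exI[of _ 0]) (simp add: lower_terms_def)
next
  case (Cons i ws)
  define w' where "w' = wm ws"
  have i: "i \<in> R" and red: "reduced_word A r w' ws" and w: "w = sr i \<circ> w'"
    using reduced_word_Cons[OF Cons.prems(1)] w'_def by auto
  have w'W: "w' \<in> W"
    using reduced_wordD[OF red] by blast
  have "length ws = len w'" "length (i # ws) = len w"
    using reduced_wordD[OF red] reduced_wordD[OF Cons.prems(1)] by blast+
  then have lw: "len w' + 1 = len w"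
    by simp
  then have "descents A r w' \<subseteq> J"
    using descents_reduced_left[OF i w'W] w Cons.prems(2) by blast
  then obtain c where c: "foldr (\<lambda>i g. demazure_bar A r i \<circ> g) ws id (frag_of (fund_sum r J))
      = frag_of (w' (fund_sum r J)) + c" "lower_terms (fund_sum r J) c"
    using Cons.IH[OF red] by blast
  have "w' (fund_sum r J) i > 0"
    using fund_sum_coord_pos[OF w'W i w] lw Cons.prems(2) by simp
  then obtain c' where c': "demazure_bar A r i (frag_of (w' (fund_sum r J)) + c)
      = frag_of (sr i (w' (fund_sum r J))) + c'" "lower_terms (fund_sum r J) c'"
    using lower_terms_demazure_bar_step[OF i _ dominant_orbit[OF fund_sum_dominant w'W] c(2)]
      by blast
  then have "foldr (\<lambda>i g. demazure_bar A r i \<circ> g) (i # ws) id (frag_of (fund_sum r J))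
      = frag_of (w (fund_sum r J)) + c'"
    using c(1) w by simp
  with c'(2) show ?case
    by blast
qed

lemma lower_terms_weight_less:
  assumes "lower_terms lam c" "v \<in> Poly_Mapping.keys c"
  shows "in_lattice r v \<and> weight_less A r (dom_rep A r v) lam"
proof -
  have v: "in_lattice r v" "orbit_below lam v" "B v v < B lam lam"
    using assms unfolding lower_terms_def by auto
  obtain u where u: "u \<in> W" "u v = dom_rep A r v"
    using dom_rep_in_orbit[OF v(1)] by blast
  have "weight_le A r (dom_rep A r v) lam"
    using v(2) u unfolding orbit_below_def weight_le_iff_Qplus by metis
  moreover have "B (dom_rep A r v) (dom_rep A r v) = B v v"
    using B_weyl_invariant[OF u(1)] u(2) by metis
  ultimately show ?thesis
    using v unfolding weight_less_def by auto
qed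

lemma fund_sum_inj:
  assumes "J \<subseteq> R" "J' \<subseteq> R" "fund_sum r J = fund_sum r J'"
  shows "J = J'"
proof -
  have "j \<in> J \<longleftrightarrow> j \<in> J'" if "j \<in> R" for j
    using fun_cong[OF assms(3), of j] fund_sum_apply[OF that] by (auto split: if_splits)
  then show ?thesis
    using assms(1,2) by blast
qed

text \<open>A right descent \<open>s\<^sub>j\<close> of \<open>x\<close> would give a negative root \<open>x \<gamma>\<^sub>j\<close> orthogonal to \<open>\<lambda>\<^sub>J\<close>,
  i.e. supported outside \<open>J\<close>; then \<open>u x \<gamma>\<^sub>j\<close> is negative although \<open>j \<notin> J \<supseteq> D(u x)\<close>.\<close>
lemma stabilizer_fund_sum_eq_id:
  assumes u: "u \<in> W" and x: "x \<in> W" and Du: "descents A r u \<subseteq> J" and Dux: "descents A r (u \<circ> x) \<subseteq> J"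
    and fix_lam: "x (fund_sum r J) = fund_sum r J"
  shows "x = id"
proof (rule ccontr)
  define lam where "lam = fund_sum r J"
  assume "x \<noteq> id"
  then have "len x > 0"
    using len_eq_0[OF x] by auto
  then obtain j x1 where j: "j \<in> R" "x1 \<in> W" "x = x1 \<circ> sr j" "len x1 + 1 = len x"
    using len_split_last[OF x] by blast
  then obtain n where n: "- x (\<gamma> j) = root_comb n"
    using negative_root_image[OF x j(1)] unfolding Qplus_def by auto
  have "B lam (x (\<gamma> j)) = B lam (\<gamma> j)"
    using B_weyl_invariant[OF x, of lam "\<gamma> j"] fix_lam lam_def by simp
  moreover have "2 * B lam (\<gamma> j) = (if j \<in> J then root_norm j else 0)"
    using coord_root_norm[OF j(1), of lam] fund_sum_apply[OF j(1)] lam_def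
      by (cases "j \<in> J") simp_all
  moreover have "B lam (root_comb n) = - B lam (x (\<gamma> j))"
    using n[symmetric] B_neg_right by simp
  moreover have "B lam (root_comb n) \<ge> 0"
    using B_dominant_Qplus_nonneg[OF fund_sum_dominant] lam_def Qplus_def by blast
  ultimately have orth: "B lam (root_comb n) = 0" and "j \<notin> J"
    using root_norm_pos[OF j(1)] by (auto split: if_splits)
  have "Qplus (u (root_comb n))"
    using Qplus_weyl_root_comb_orthogonal[OF u Du] orth lam_def by simp
  moreover have "u (root_comb n) = - (u \<circ> x) (\<gamma> j)"
    unfolding n[symmetric] weyl_neg[OF u] by simp
  ultimately have neg: "Qplus (- (u \<circ> x) (\<gamma> j))"
    by simp
  have "j \<notin> descents A r (u \<circ> x)"
    using Dux \<open>j \<notin> J\<close> by blast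
  then have "Qplus ((u \<circ> x) (\<gamma> j))"
    using positive_root_image[OF weyl_comp[OF u x] j(1)] j(1) by (simp add: descents_iff)
  then have "(u \<circ> x) (\<gamma> j) = 0"
    using Qplus_antisym neg by blast
  then show False
    using weyl_nonzero[OF weyl_comp[OF u x] sroot_nonzero[OF j(1)]] by simp
qed

text \<open>If \<open>e\<^bsup>w \<lambda>\<^sub>J\<^esup> = z\<^sub>u\<close>, then \<open>\<lambda>\<^sub>J = \<lambda>\<^bsub>D(u)\<^esub>\<close> as both are dominant, and \<open>u\<^sup>-\<^sup>1 w\<close> fixes
  \<open>\<lambda>\<^sub>J\<close>.\<close>
lemma descent_monomial_iff:
  assumes J: "J \<subseteq> R" and w: "w \<in> W" and D: "descents A r w \<subseteq> J"
  shows "is_descent_monomial A r (frag_of (w (fund_sum r J))) \<longleftrightarrow> descents A r w = J"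
proof
  assume "descents A r w = J"
  then show "is_descent_monomial A r (frag_of (w (fund_sum r J)))"
    unfolding is_descent_monomial_def descent_monomial_def using w by blast
next
  assume "is_descent_monomial A r (frag_of (w (fund_sum r J)))"
  then obtain u where u: "u \<in> W" "w (fund_sum r J) = u (fund_sum r (descents A r u))"
    unfolding is_descent_monomial_def descent_monomial_def frag_of_eq by blast
  define x where "x = inv u \<circ> w"
  have x: "x \<in> W" "u \<circ> x = w"
    unfolding x_def using weyl_comp[OF weyl_inv_in[OF u(1)] w] weyl_inv[OF u(1)]
      by (auto simp: o_assoc)
  have "x (fund_sum r J) = fund_sum r (descents A r u)"
    using u unfolding x_def by simp
  moreover have "descents A r u \<subseteq> R"
    unfolding descents_def by blast
  ultimately have Du: "descents A r u = J"
    using dominant_orbit_unique[OF fund_sum_dominant fund_sum_dominant x(1)] fund_sum_inj[OF J]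
      by blast
  moreover have "descents A r (u \<circ> x) \<subseteq> J"
    using x(2) D by simp
  ultimately have "x = id"
    using stabilizer_fund_sum_eq_id[OF u(1) x(1), of J] \<open>x (fund_sum r J) = _\<close> by simp
  then show "descents A r w = J"
    using x(2) Du by simp
qed

lemma demazure_bar_w_leading_term:
  assumes "w \<in> W" "descents A r w \<subseteq> J"
  obtains c where "demazure_bar_w A r w (frag_of (fund_sum r J)) = frag_of (w (fund_sum r J)) + c"
    "lower_terms (fund_sum r J) c"
proof -
  have "reduced_word A r w (SOME ws. reduced_word A r w ws)"
    using reduced_word_exists[OF assms(1)] by (rule someI_ex)
  from demazure_bar_word_leading_term[OF this assms(2)] obtain c where
    "foldr (\<lambda>i g. demazure_bar A r i \<circ> g) (SOME ws. reduced_word A r w ws) id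
        (frag_of (fund_sum r J)) = frag_of (w (fund_sum r J)) + c"
    "lower_terms (fund_sum r J) c"
    by blast
  then show ?thesis
    using that unfolding demazure_bar_w_def by blast
qed

end

theorem lemma5p2:
  fixes A :: "nat \<Rightarrow> nat \<Rightarrow> int" and r :: nat and al :: "nat list" and w :: "wt \<Rightarrow> wt"
  assumes "root_datum A r"
    and "is_composition (r + 1) al"
    and "w \<in> weyl A r"
    and "descents A r w \<subseteq> comp_descents al"
  shows "(\<exists>c :: wt \<Rightarrow>\<^sub>0 int.
            demazure_bar_w A r w (Poly_Mapping.single (fund_sum r (comp_descents al)) 1)
              = Poly_Mapping.single (w (fund_sum r (comp_descents al))) 1 + c
          \<and> (\<forall>lam\<in>Poly_Mapping.keys c. in_lattice r lam
                \<and> weight_less A r (dom_rep A r lam) (fund_sum r (comp_descents al))))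
       \<and> (is_descent_monomial A r (Poly_Mapping.single (w (fund_sum r (comp_descents al))) 1)
            \<longleftrightarrow> descents A r w = comp_descents al)"
proof -
  interpret finite_root_datum A r
    by unfold_locales (rule assms(1))
  obtain c where c: "demazure_bar_w A r w (frag_of (fund_sum r (comp_descents al)))
      = frag_of (w (fund_sum r (comp_descents al))) + c"
    "lower_terms (fund_sum r (comp_descents al)) c"
    using demazure_bar_w_leading_term[OF assms(3,4)] .
  moreover have "\<forall>lam\<in>Poly_Mapping.keys c. in_lattice r lam
      \<and> weight_less A r (dom_rep A r lam) (fund_sum r (comp_descents al))"
    using lower_terms_weight_less[OF c(2)] by blast
  ultimately show ?thesis
    using descent_monomial_iff[OF comp_descents_subset[OF assms(2)] assms(3,4)] by blast
qed

end
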